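(* Let $T'=(m_1,\dots,m_p)$ be a pseudo type vector, let $\mathbb X\subset\mathbb P^2$ be the standard pseudo linear configuration of type $T'$, and let $\Delta T'=(m_1,m_2-m_1,\dots,m_p-m_{p-1})$. Then: (i) $\mathbb X$ can be obtained from the empty scheme by a finite sequence of basic double links; (ii) the first difference of the Hilbert function of $\mathbb X$ is the standard O-sequence associated to $T'$; (iii) assume that between any two zero entries of $\Delta T'$ there is at least one entry $>1$. If $\Delta T'$ ends with a $0$, or ends with a $0$ followed by some number of $1$'s, then the regularity of $\mathbb X$ is $m_p+1$; otherwise the regularity is $m_p$; (iv) if $\Delta T'$ has two zero entries between which there is no entry $>1$, then the regularity of $\mathbb X$ may be arbitrarily larger than $m_p$ (i.e. for every $N$ there are such pseudo type vectors whose standard pseudo linear configuration has regularity $\ge m_p+N$).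
   Context: Work over an infinite field $k$ of characteristic zero, $R=k[x_0,x_1,x_2]$, $\mathbb P^2=\operatorname{Proj}R$. A pseudo type vector is a sequence $(m_1,\dots,m_p)$ of positive integers with $m_1\le\cdots\le m_p$ such that whenever $m_{i-1}=m_i$ we have $m_i<m_{i+1}$. The standard pseudo linear configuration of type $(m_1,\dots,m_p)$ consists, for each $i=1,\dots,p$, of the $m_i$ points $[j:p-i:1]$, $0\le j\le m_i-1$. For a zero-dimensional scheme $\mathbb Y$ with saturated ideal $I_{\mathbb Y}$, $h_{\mathbb Y}(t)=\dim_k(R/I_{\mathbb Y})_t$, $\Delta h(t)=h(t)-h(t-1)$ (with $h(t)=0$ for $t<0$), and the regularity of $\mathbb Y$ is the least $t$ with $\Delta h_{\mathbb Y}(t)=0$ (equivalently $\min\{t:h^1(\mathcal I_{\mathbb Y}(t-1))=0\}$). Standard O-sequence: set $m_0=0$, $m_{p+1}=\infty$. For each $i$: if $m_{i-1}<m_i<m_{i+1}$, let $s_i$ be the sequence with $(s_i)_t=1$ for $0\le t\le m_i-1$ and $0$ otherwise; if $m_{i-1}=m_i<m_{i+1}$, let $(s_i)_0=1$, $(s_i)_t=2$ for $1\le t\le m_i-1$, $(s_i)_{m_i}=1$, and $0$ otherwise; if $m_{i-1}<m_i=m_{i+1}$, $s_i$ is not defined. For a sequence $s$ and $k\ge0$, $s(-k)$ is $s$ shifted right by $k$ places ($s(-k)_t=s_{t-k}$). The standard O-sequence associated to $T'$ is $\sum_i s_i(i-p)$, the sum over those $i$ for which $s_i$ is defined (so $s_i$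 is shifted right by $p-i$). Basic double link: if $\mathbb Y$ is a zero-dimensional subscheme (or empty, with ideal $R$), $F\in I_{\mathbb Y}$ and $G$ are homogeneous forms with $F,G$ a regular sequence, then $G\cdot I_{\mathbb Y}+(F)$ is the saturated ideal of a zero-dimensional scheme, called a basic double link of $\mathbb Y$. *)

theory Defs
  imports Main "HOL.Vector_Spaces" "HOL-Library.Poly_Mapping" "HOL-Library.Product_Plus"
begin

text \<open>A monomial x0^a x1^b x2^c is the exponent triple (a,b,c); a polynomial is a
finitely supported map from exponent triples to coefficients (ring structure:
the convolution product of HOL-Library.Poly_Mapping).\<close>

type_synonym mon3 = "nat \<times> nat \<times> nat"
type_synonym 'a poly3 = "mon3 \<Rightarrow>\<^sub>0 'a"

definition mdeg :: "mon3 \<Rightarrow> nat" where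
  "mdeg m = fst m + fst (snd m) + snd (snd m)"

text \<open>F is a form of degree d (the zero polynomial is a form of every degree).\<close>
definition homog_of_deg :: "nat \<Rightarrow> 'a::zero poly3 \<Rightarrow> bool" where
  "homog_of_deg d F \<longleftrightarrow> (\<forall>m \<in> Poly_Mapping.keys F. mdeg m = d)"

definition homogeneous :: "'a::zero poly3 \<Rightarrow> bool" where
  "homogeneous F \<longleftrightarrow> (\<exists>d. homog_of_deg d F)"

definition Rdeg :: "nat \<Rightarrow> 'a::zero poly3 set" where
  "Rdeg d = {F. homog_of_deg d F}"

definition pscale :: "'a::field \<Rightarrow> 'a poly3 \<Rightarrow> 'a poly3" where
  "pscale c F = Poly_Mapping.map (\<lambda>x. c * x) F"

definition kdim :: "'a::field poly3 set \<Rightarrow> nat" where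
  "kdim V = vector_space.dim pscale V"

text \<open>A point of P^2 given by a representative (a0,a1,a2) of homogeneous coordinates.\<close>
type_synonym 'a pt = "'a \<times> 'a \<times> 'a"

definition mon_val :: "mon3 \<Rightarrow> 'a::comm_semiring_1 pt \<Rightarrow> 'a" where
  "mon_val m P = fst P ^ fst m * fst (snd P) ^ fst (snd m) * snd (snd P) ^ snd (snd m)"

definition eval_comp :: "nat \<Rightarrow> 'a::comm_semiring_1 poly3 \<Rightarrow> 'a pt \<Rightarrow> 'a" where
  "eval_comp d F P = (\<Sum>m \<in> {m \<in> Poly_Mapping.keys F. mdeg m = d}. Poly_Mapping.lookup F m * mon_val m P)"

text \<open>Saturated (homogeneous) ideal of a finite reduced set of points: the
polynomials all of whose homogeneous components vanish at every point.\<close>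
definition ideal_of_points :: "'a::comm_semiring_1 pt set \<Rightarrow> 'a poly3 set" where
  "ideal_of_points X = {F. \<forall>d. \<forall>P \<in> X. eval_comp d F P = 0}"

definition hilb :: "'a::field poly3 set \<Rightarrow> nat \<Rightarrow> nat" where
  "hilb I t = kdim (Rdeg t :: 'a poly3 set) - kdim (I \<inter> Rdeg t)"

definition delta_hilb :: "'a::field poly3 set \<Rightarrow> nat \<Rightarrow> int" where
  "delta_hilb I t = int (hilb I t) - (if t = 0 then 0 else int (hilb I (t - 1)))"

definition regularity :: "'a::field poly3 set \<Rightarrow> nat" where
  "regularity I = (LEAST t. delta_hilb I t = 0)"

definition principal :: "'a::comm_ring_1 poly3 \<Rightarrow> 'a poly3 set" where
  "principal F = {F * H | H. True}"

definition regular_seq2 :: "'a::comm_ring_1 poly3 \<Rightarrow> 'a poly3 \<Rightarrow> bool" where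
  "regular_seq2 F G \<longleftrightarrow>
     (\<forall>H. F * H = 0 \<longrightarrow> H = 0) \<and>
     (\<forall>H. G * H \<in> principal F \<longrightarrow> H \<in> principal F) \<and>
     (1 \<notin> {F * A + G * B | A B. True})"

definition bdl_ideal :: "'a::comm_ring_1 poly3 set \<Rightarrow> 'a poly3 \<Rightarrow> 'a poly3 \<Rightarrow> 'a poly3 set" where
  "bdl_ideal I F G = {G * A + F * B | A B. A \<in> I}"

definition basic_double_link :: "'a::comm_ring_1 poly3 set \<Rightarrow> 'a poly3 set \<Rightarrow> bool" where
  "basic_double_link J I \<longleftrightarrow>
     (\<exists>F G. homogeneous F \<and> homogeneous G \<and> F \<in> I \<and> regular_seq2 F G \<and> J = bdl_ideal I F G)"

text \<open>Obtainable from the empty scheme (ideal R) by finitely many basic double links.\<close>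
definition obtainable_by_bdl :: "'a::comm_ring_1 poly3 set \<Rightarrow> bool" where
  "obtainable_by_bdl I \<longleftrightarrow>
     (\<exists>n Is. Is 0 = UNIV \<and> Is n = I \<and> (\<forall>k<n. basic_double_link (Is (Suc k)) (Is k)))"

text \<open>A list ms = [m_1,...,m_p] (so m_i = ms ! (i-1)), p >= 1.\<close>
definition pseudo_type_vector :: "nat list \<Rightarrow> bool" where
  "pseudo_type_vector ms \<longleftrightarrow> ms \<noteq> [] \<and> (\<forall>x \<in> set ms. 0 < x) \<and> sorted ms \<and>
     (\<forall>i. i + 2 < length ms \<longrightarrow> ms ! i = ms ! (i+1) \<longrightarrow> ms ! (i+1) < ms ! (i+2))"

definition std_config :: "nat list \<Rightarrow> 'a::comm_semiring_1 pt set" where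
  "std_config ms = {(of_nat j, of_nat (length ms - i), 1) | i j.
       1 \<le> i \<and> i \<le> length ms \<and> j < ms ! (i - 1)}"

text \<open>Standard O-sequence. m_i for 1 <= i <= p; m_0 = 0, m_(p+1) = infinity.\<close>
definition mval :: "nat list \<Rightarrow> nat \<Rightarrow> nat" where
  "mval ms i = (if i = 0 then 0 else ms ! (i - 1))"

definition s_seq :: "nat list \<Rightarrow> nat \<Rightarrow> nat \<Rightarrow> int" where
  "s_seq ms i t =
     (let p = length ms; mi = mval ms i; lt_next = (i = p \<or> mi < mval ms (i + 1)) in
      if mval ms (i - 1) < mi \<and> lt_next then (if t < mi then 1 else 0)
      else if mval ms (i - 1) = mi \<and> lt_next then
        (if t = 0 then 1 else if t < mi then 2 else if t = mi then 1 else 0)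
      else 0)"

definition std_O_seq :: "nat list \<Rightarrow> nat \<Rightarrow> int" where
  "std_O_seq ms t = (\<Sum>i = 1..length ms.
      if length ms - i \<le> t then s_seq ms i (t - (length ms - i)) else 0)"

definition delta_type :: "nat list \<Rightarrow> nat list" where
  "delta_type ms = map (\<lambda>i. mval ms (i + 1) - mval ms i) [0..<length ms]"

definition zeros_separated :: "nat list \<Rightarrow> bool" where
  "zeros_separated d \<longleftrightarrow> (\<forall>a b. a < b \<and> b < length d \<and> d ! a = 0 \<and> d ! b = 0 \<longrightarrow>
      (\<exists>c. a < c \<and> c < b \<and> 1 < d ! c))"

definition ends_zero_ones :: "nat list \<Rightarrow> bool" where
  "ends_zero_ones d \<longleftrightarrow> (\<exists>k < length d. d ! k = 0 \<and> (\<forall>j. k < j \<and> j < length d \<longrightarrow> d ! j = 1))"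

end

theory Submission
  imports Defs "HOL-Computational_Algebra.Polynomial" "HOL-Library.Product_Lexorder"
begin

(* The configuration is built from the top row down. Adding the row of m points [j : c : 1],
   j < m, to points with first coordinate < m lying off the line y = c z is the basic double
   link with F = prod_(j<m) (x - j z) and G = y - c z.

   The points (j, p - i) of the configuration form a staircase D, closed downwards. The forms
   prod_(k<a) (x - k z) * prod_(k<b) (y - k z) * z^(t-a-b), for (a, b) in D with a + b <= t, are
   triangular on D with respect to the componentwise order (prod_(k<a) (n - k) vanishes for
   integers n < a), and every monomial of degree t agrees on D with a combination of them.
   So they form a basis of R_t modulo the ideal: h(t) counts the points of D of degree <= t,
   and Delta h(t) counts the rows of D meeting the diagonal a + b = t. The standard O-sequence
   counts the same rows, the sequence s_i of a run m_(i-1) = m_i accounting for both rows.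

   Hence the regularity is max_i (p - i + m_i) = m_p + max_i sum_(k >= i) (1 - Delta T'_k). If
   every two zeros of Delta T' are separated by an entry > 1, these suffix sums are at most 1,
   with equality exactly when Delta T' ends with a zero followed by ones. *)

(* The lexicographic order on exponent triples is compatible with addition; with it,
   Poly_Mapping makes 'a poly3 an integral domain when 'a is a field. *)
instance prod :: ("{ordered_cancel_comm_monoid_add, linorder}", "{ordered_cancel_comm_monoid_add, linorder}")
    ordered_cancel_comm_monoid_add
  by standard (auto simp: less_eq_prod_def less_prod_def intro: add_strict_left_mono add_left_mono)

definition is_ring_hom :: "('a::comm_semiring_1 \<Rightarrow> 'b::comm_semiring_1) \<Rightarrow> bool" where
  "is_ring_hom \<phi> \<longleftrightarrow> \<phi> 0 = 0 \<and> \<phi> 1 = 1 \<and> (\<forall>x y. \<phi> (x + y) = \<phi> x + \<phi> y) \<and> (\<forall>x y. \<phi> (x * y) = \<phi> x * \<phi> y)"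

lemma is_ring_homD:
  assumes "is_ring_hom \<phi>"
  shows "\<phi> 0 = 0" "\<phi> 1 = 1" "\<phi> (x + y) = \<phi> x + \<phi> y" "\<phi> (x * y) = \<phi> x * \<phi> y"
  using assms by (auto simp: is_ring_hom_def)

definition cst :: "'a::zero \<Rightarrow> 'a poly3" where
  "cst v = Poly_Mapping.single 0 v"

lemma is_ring_hom_ident [simp]: "is_ring_hom (\<lambda>x. x)"
  by (simp add: is_ring_hom_def)

lemma is_ring_hom_cst [simp]: "is_ring_hom (cst :: 'a::comm_semiring_1 \<Rightarrow> 'a poly3)"
  by (simp add: is_ring_hom_def cst_def single_add mult_single)

definition eval_map :: "('a::zero \<Rightarrow> 'b::comm_semiring_1) \<Rightarrow> 'b pt \<Rightarrow> 'a poly3 \<Rightarrow> 'b" where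
  "eval_map \<phi> P H = (\<Sum>m\<in>Poly_Mapping.keys H. \<phi> (Poly_Mapping.lookup H m) * mon_val m P)"

abbreviation peval :: "'a::comm_semiring_1 poly3 \<Rightarrow> 'a pt \<Rightarrow> 'a" where
  "peval H P \<equiv> eval_map (\<lambda>x. x) P H"

abbreviation psubst :: "'a::comm_semiring_1 poly3 \<Rightarrow> 'a poly3 \<Rightarrow> 'a poly3 \<Rightarrow> 'a poly3 \<Rightarrow> 'a poly3" where
  "psubst A B C H \<equiv> eval_map cst (A, B, C) H"

lemma mon_val_add: "mon_val (m + n) P = mon_val m P * mon_val n P"
  by (simp add: mon_val_def power_add fst_add snd_add algebra_simps)

lemma mon_val_zero [simp]: "mon_val 0 P = 1"
  by (simp add: mon_val_def zero_prod_def)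

lemma eval_map_superset:
  assumes "finite S" "Poly_Mapping.keys H \<subseteq> S" "\<phi> 0 = 0"
  shows "eval_map \<phi> P H = (\<Sum>m\<in>S. \<phi> (Poly_Mapping.lookup H m) * mon_val m P)"
  unfolding eval_map_def
  by (rule sum.mono_neutral_left) (use assms in \<open>auto simp: in_keys_iff\<close>)

lemma eval_map_zero [simp]: "eval_map \<phi> P 0 = 0"
  by (simp add: eval_map_def)

lemma eval_map_add [simp]:
  assumes "is_ring_hom \<phi>"
  shows "eval_map \<phi> P (F + G) = eval_map \<phi> P F + eval_map \<phi> P G"
proof -
  let ?S = "Poly_Mapping.keys F \<union> Poly_Mapping.keys G"
  have "eval_map \<phi> P (F + G) = (\<Sum>m\<in>?S. \<phi> (Poly_Mapping.lookup (F + G) m) * mon_val m P)"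
    using assms by (intro eval_map_superset keys_add) (simp_all add: is_ring_homD)
  also have "\<dots> = (\<Sum>m\<in>?S. \<phi> (Poly_Mapping.lookup F m) * mon_val m P)
      + (\<Sum>m\<in>?S. \<phi> (Poly_Mapping.lookup G m) * mon_val m P)"
    using assms by (simp add: lookup_add is_ring_homD distrib_right sum.distrib)
  also have "\<dots> = eval_map \<phi> P F + eval_map \<phi> P G"
    using assms by (simp add: eval_map_superset[of ?S F] eval_map_superset[of ?S G] is_ring_homD)
  finally show ?thesis .
qed

lemma eval_map_single:
  "\<phi> 0 = 0 \<Longrightarrow> eval_map \<phi> P (Poly_Mapping.single k v) = \<phi> v * mon_val k P"
  by (cases "v = 0") (simp_all add: eval_map_def)

lemma eval_map_sum [simp]:
  "is_ring_hom \<phi> \<Longrightarrow> eval_map \<phi> P (\<Sum>i\<in>I. f i) = (\<Sum>i\<in>I. eval_map \<phi> P (f i))"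
  by (induction I rule: infinite_finite_induct) simp_all

lemma sum_single_lookup: "(\<Sum>m\<in>Poly_Mapping.keys H. Poly_Mapping.single m (Poly_Mapping.lookup H m)) = H"
  by (rule poly_mapping_eqI) (simp add: lookup_sum lookup_single when_def in_keys_iff)

lemma eval_map_mult [simp]:
  assumes "is_ring_hom \<phi>"
  shows "eval_map \<phi> P (F * G) = eval_map \<phi> P F * eval_map \<phi> P G"
proof -
  let ?KF = "Poly_Mapping.keys F" and ?KG = "Poly_Mapping.keys G"
  have "F * G = (\<Sum>m\<in>?KF. Poly_Mapping.single m (Poly_Mapping.lookup F m))
      * (\<Sum>n\<in>?KG. Poly_Mapping.single n (Poly_Mapping.lookup G n))"
    by (simp add: sum_single_lookup)
  also have "\<dots> = (\<Sum>m\<in>?KF. \<Sum>n\<in>?KG.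
      Poly_Mapping.single (m + n) (Poly_Mapping.lookup F m * Poly_Mapping.lookup G n))"
    by (simp add: sum_product mult_single)
  finally have "eval_map \<phi> P (F * G) = (\<Sum>m\<in>?KF. \<Sum>n\<in>?KG.
      \<phi> (Poly_Mapping.lookup F m) * mon_val m P * (\<phi> (Poly_Mapping.lookup G n) * mon_val n P))"
    using assms by (simp add: eval_map_single is_ring_homD mon_val_add mult_ac)
  also have "\<dots> = eval_map \<phi> P F * eval_map \<phi> P G"
    by (simp add: eval_map_def sum_product)
  finally show ?thesis .
qed

lemma eval_map_one [simp]: "is_ring_hom \<phi> \<Longrightarrow> eval_map \<phi> P 1 = 1"
  using eval_map_single[of \<phi> P 0 1] by (simp add: is_ring_homD)

lemma eval_map_cst [simp]: "is_ring_hom \<phi> \<Longrightarrow> eval_map \<phi> P (cst v) = \<phi> v"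
  by (simp add: cst_def eval_map_single is_ring_homD)

lemma eval_map_diff [simp]:
  fixes \<phi> :: "'a::comm_ring_1 \<Rightarrow> 'b::comm_ring_1"
  assumes "is_ring_hom \<phi>"
  shows "eval_map \<phi> P (F - G) = eval_map \<phi> P F - eval_map \<phi> P G"
  using eval_map_add[OF assms, of P "F - G" G] by (simp add: algebra_simps)

lemma eval_map_power [simp]: "is_ring_hom \<phi> \<Longrightarrow> eval_map \<phi> P (F ^ n) = eval_map \<phi> P F ^ n"
  by (induction n) simp_all

lemma eval_map_prod [simp]:
  "is_ring_hom \<phi> \<Longrightarrow> eval_map \<phi> P (\<Prod>i\<in>I. f i) = (\<Prod>i\<in>I. eval_map \<phi> P (f i))"
  by (induction I rule: infinite_finite_induct) simp_all

definition X0 :: "'a::{zero,one} poly3" where "X0 = Poly_Mapping.single (1, 0, 0) 1"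
definition X1 :: "'a::{zero,one} poly3" where "X1 = Poly_Mapping.single (0, 1, 0) 1"
definition X2 :: "'a::{zero,one} poly3" where "X2 = Poly_Mapping.single (0, 0, 1) 1"

lemma eval_map_X [simp]:
  assumes "is_ring_hom \<phi>"
  shows "eval_map \<phi> (a, b, c) X0 = a" "eval_map \<phi> (a, b, c) X1 = b" "eval_map \<phi> (a, b, c) X2 = c"
  using assms by (simp_all add: X0_def X1_def X2_def eval_map_single is_ring_homD mon_val_def)

lemma eval_map_mon_val:
  "is_ring_hom \<phi> \<Longrightarrow> eval_map \<phi> Q (mon_val m (A, B, C)) = mon_val m (eval_map \<phi> Q A, eval_map \<phi> Q B, eval_map \<phi> Q C)"
  by (simp add: mon_val_def)

lemma eval_map_psubst:
  assumes "is_ring_hom \<phi>"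
  shows "eval_map \<phi> Q (psubst A B C H) = eval_map \<phi> (eval_map \<phi> Q A, eval_map \<phi> Q B, eval_map \<phi> Q C) H"
proof -
  have "eval_map \<phi> Q (psubst A B C H)
      = eval_map \<phi> Q (\<Sum>m\<in>Poly_Mapping.keys H. cst (Poly_Mapping.lookup H m) * mon_val m (A, B, C))"
    by (simp only: eval_map_def[of cst])
  also have "\<dots> = (\<Sum>m\<in>Poly_Mapping.keys H.
      \<phi> (Poly_Mapping.lookup H m) * mon_val m (eval_map \<phi> Q A, eval_map \<phi> Q B, eval_map \<phi> Q C))"
    using assms by (simp add: eval_map_mon_val)
  finally show ?thesis by (simp only: eval_map_def[of \<phi> _ H])
qed

lemma single_power: "Poly_Mapping.single (a, b, e) (v::'a::comm_semiring_1) ^ n = Poly_Mapping.single (n * a, n * b, n * e) (v ^ n)"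
  by (induction n) (simp_all add: mult_single zero_prod_def flip: single_one)

lemma cst_mult_mon_val_X: "cst v * mon_val m (X0, X1, X2) = Poly_Mapping.single m (v::'a::comm_semiring_1)"
  by (cases m) (simp add: mon_val_def cst_def X0_def X1_def X2_def single_power mult_single)

lemma psubst_X: "psubst X0 X1 X2 H = H"
  by (simp add: eval_map_def cst_mult_mon_val_X sum_single_lookup)

lemma mdeg_add [simp]: "mdeg (m + n) = mdeg m + mdeg n"
  by (simp add: mdeg_def)

lemma homog_of_deg_mult:
  assumes "homog_of_deg a F" "homog_of_deg b G"
  shows "homog_of_deg (a + b) (F * G)"
  unfolding homog_of_deg_def
proof
  fix m assume "m \<in> Poly_Mapping.keys (F * G)"
  then obtain u v where "m = u + v" "u \<in> Poly_Mapping.keys F" "v \<in> Poly_Mapping.keys G"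
    using keys_mult by blast
  then show "mdeg m = a + b" using assms by (simp add: homog_of_deg_def)
qed

lemma homog_of_deg_add: "homog_of_deg a F \<Longrightarrow> homog_of_deg a G \<Longrightarrow> homog_of_deg a (F + G)"
  using keys_add[of F G] unfolding homog_of_deg_def by blast

lemma homog_of_deg_diff:
  "homog_of_deg a (F::'a::ab_group_add poly3) \<Longrightarrow> homog_of_deg a G \<Longrightarrow> homog_of_deg a (F - G)"
  using keys_diff[of F G] unfolding homog_of_deg_def by blast

lemma homog_of_deg_zero [simp]: "homog_of_deg d 0"
  by (simp add: homog_of_deg_def)

lemma homog_of_deg_single: "homog_of_deg (mdeg k) (Poly_Mapping.single k v)"
  by (simp add: homog_of_deg_def)

lemma homog_of_deg_cst: "homog_of_deg 0 (cst v)"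
  using homog_of_deg_single[of 0 v] by (simp add: cst_def mdeg_def)

lemma homog_of_deg_X:
  "homog_of_deg 1 (X0 :: 'a::zero_neq_one poly3)" "homog_of_deg 1 (X1 :: 'a poly3)" "homog_of_deg 1 (X2 :: 'a poly3)"
  using homog_of_deg_single[of "(1, 0, 0)" "1::'a"] homog_of_deg_single[of "(0, 1, 0)" "1::'a"]
    homog_of_deg_single[of "(0, 0, 1)" "1::'a"]
  by (simp_all add: X0_def X1_def X2_def mdeg_def)

lemma homog_of_deg_prod:
  "(\<And>i. i \<in> I \<Longrightarrow> homog_of_deg (d i) (f i :: 'a::comm_semiring_1 poly3)) \<Longrightarrow>
    homog_of_deg (\<Sum>i\<in>I. d i) (\<Prod>i\<in>I. f i)"
proof (induction I rule: infinite_finite_induct)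
  case (insert x F)
  then show ?case by (simp add: homog_of_deg_mult)
qed (use homog_of_deg_cst[of "1::'a"] in \<open>simp_all add: cst_def\<close>)

lemma homog_of_deg_power:
  "homog_of_deg d (F :: 'a::comm_semiring_1 poly3) \<Longrightarrow> homog_of_deg (n * d) (F ^ n)"
  using homog_of_deg_prod[of "{..<n}" "\<lambda>_. d" "\<lambda>_. F"] by simp

lemma homog_of_deg_linear:
  "homog_of_deg 1 (X0 - cst c * X2 :: 'a::comm_ring_1 poly3)"
  "homog_of_deg 1 (X1 - cst c * X2 :: 'a::comm_ring_1 poly3)"
proof -
  have "homog_of_deg (0 + 1) (cst c * X2 :: 'a poly3)"
    by (intro homog_of_deg_mult homog_of_deg_cst homog_of_deg_X)
  then show "homog_of_deg 1 (X0 - cst c * X2 :: 'a poly3)" "homog_of_deg 1 (X1 - cst c * X2 :: 'a poly3)"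
    by (simp_all only: add_0 homog_of_deg_diff homog_of_deg_X)
qed

lemma sum_coeffs_eq_0_if_vanishes:
  fixes f :: "'i \<Rightarrow> 'a::field_char_0" and g :: "'i \<Rightarrow> nat"
  assumes "finite S" and vanish: "\<And>l. l \<noteq> 0 \<Longrightarrow> (\<Sum>m\<in>S. f m * l ^ g m) = 0"
  shows "(\<Sum>m\<in>{m\<in>S. g m = n}. f m) = 0"
proof -
  define p where "p = (\<Sum>m\<in>S. monom (f m) (g m))"
  have "p = 0"
  proof (rule ccontr)
    assume "p \<noteq> 0"
    then have "finite {x. poly p x = 0}" by (rule poly_roots_finite)
    moreover have "UNIV - {0} \<subseteq> {x. poly p x = 0}"
      using vanish by (auto simp: p_def poly_sum poly_monom)
    ultimately have "finite (UNIV - {0::'a})" by (rule finite_subset[rotated])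
    then have "finite (UNIV :: 'a set)" by simp
    then show False by (simp add: infinite_UNIV_char_0)
  qed
  moreover have "coeff p n = (\<Sum>m\<in>S. if g m = n then f m else 0)"
    by (simp add: p_def coeff_sum eq_commute)
  ultimately show ?thesis
    using assms(1) by (simp add: sum.inter_filter)
qed

definition pt_scale :: "'a::comm_ring_1 \<Rightarrow> 'a pt \<Rightarrow> 'a pt" where
  "pt_scale l P = (l * fst P, l * fst (snd P), l * snd (snd P))"

lemma pt_scale_simps [simp]: "pt_scale l (a, b, c) = (l * a, l * b, l * c)" "pt_scale 1 P = P"
  by (simp_all add: pt_scale_def)

lemma peval_pt_scale:
  "peval H (pt_scale l P) = (\<Sum>m\<in>Poly_Mapping.keys H. Poly_Mapping.lookup H m * mon_val m P * l ^ mdeg m)"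
  by (simp add: eval_map_def pt_scale_def mon_val_def mdeg_def power_mult_distrib power_add mult_ac)

lemma peval_pt_scale_homog:
  assumes "homog_of_deg d H"
  shows "peval H (pt_scale l P) = l ^ d * peval H P"
proof -
  have "peval H (pt_scale l P) = (\<Sum>m\<in>Poly_Mapping.keys H. Poly_Mapping.lookup H m * mon_val m P * l ^ d)"
    unfolding peval_pt_scale using assms by (intro sum.cong) (auto simp: homog_of_deg_def)
  then show ?thesis by (simp add: eval_map_def sum_distrib_left mult_ac)
qed

text \<open>The homogeneous components can be separated because a polynomial in l that vanishes
  at every l \<noteq> 0 is zero.\<close>
lemma in_ideal_of_points_iff:
  fixes X :: "'a::field_char_0 pt set"
  shows "H \<in> ideal_of_points X \<longleftrightarrow> (\<forall>P\<in>X. \<forall>l. l \<noteq> 0 \<longrightarrow> peval H (pt_scale l P) = 0)"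
proof -
  have expand: "peval H (pt_scale l P) = (\<Sum>d\<in>mdeg ` Poly_Mapping.keys H. l ^ d * eval_comp d H P)" for l P
    unfolding peval_pt_scale eval_comp_def sum_distrib_left
    by (subst sum.image_gen[where g = mdeg]) (auto simp: mult_ac intro!: sum.cong)
  show ?thesis
  proof
    assume "H \<in> ideal_of_points X"
    then show "\<forall>P\<in>X. \<forall>l. l \<noteq> 0 \<longrightarrow> peval H (pt_scale l P) = 0"
      by (simp add: expand ideal_of_points_def)
  next
    assume vanish: "\<forall>P\<in>X. \<forall>l. l \<noteq> 0 \<longrightarrow> peval H (pt_scale l P) = 0"
    show "H \<in> ideal_of_points X"
      unfolding ideal_of_points_def eval_comp_def
    proof (intro CollectI allI ballI)
      fix d P assume "P \<in> X"
      then have "\<And>l. l \<noteq> 0 \<Longrightarrow>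
          (\<Sum>m\<in>Poly_Mapping.keys H. Poly_Mapping.lookup H m * mon_val m P * l ^ mdeg m) = 0"
        using vanish by (simp add: peval_pt_scale)
      from sum_coeffs_eq_0_if_vanishes[OF finite_keys this]
      show "(\<Sum>m\<in>{m \<in> Poly_Mapping.keys H. mdeg m = d}. Poly_Mapping.lookup H m * mon_val m P) = 0" .
    qed
  qed
qed

lemma homog_in_ideal_of_points_iff:
  fixes X :: "'a::field_char_0 pt set"
  assumes "homog_of_deg d H"
  shows "H \<in> ideal_of_points X \<longleftrightarrow> (\<forall>P\<in>X. peval H P = 0)"
  unfolding in_ideal_of_points_iff peval_pt_scale_homog[OF assms]
proof (intro iffI ballI allI impI)
  show "peval H P = 0" if "\<forall>P\<in>X. \<forall>l. l \<noteq> 0 \<longrightarrow> l ^ d * peval H P = 0" "P \<in> X" for P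
    using that(1)[rule_format, OF that(2), of 1] by simp
qed simp

lemma peval_pt_scale_eq_0:
  fixes X :: "'a::field_char_0 pt set"
  shows "H \<in> ideal_of_points X \<Longrightarrow> P \<in> X \<Longrightarrow> l \<noteq> 0 \<Longrightarrow> peval H (pt_scale l P) = 0"
  by (simp add: in_ideal_of_points_iff)

lemma mon_val_diff_factors:
  fixes a b c a' b' c' :: "'b::comm_ring_1"
  shows "\<exists>q0 q1 q2. mon_val m (a, b, c) - mon_val m (a', b', c') = (a - a') * q0 + (b - b') * q1 + (c - c') * q2"
proof -
  obtain i j k where m: "m = (i, j, k)" by (cases m)
  have "\<exists>q. x ^ n - y ^ n = (x - y) * q" for x y :: 'b and n
    using power_diff_sumr2[of x n y] by blast
  then obtain r0 r1 r2 where r: "a ^ i - a' ^ i = (a - a') * r0" "b ^ j - b' ^ j = (b - b') * r1"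
    "c ^ k - c' ^ k = (c - c') * r2" by metis
  have "mon_val m (a, b, c) - mon_val m (a', b', c')
      = (a ^ i - a' ^ i) * b ^ j * c ^ k + a' ^ i * (b ^ j - b' ^ j) * c ^ k + a' ^ i * b' ^ j * (c ^ k - c' ^ k)"
    by (simp add: m mon_val_def algebra_simps)
  also have "\<dots> = (a - a') * (r0 * b ^ j * c ^ k) + (b - b') * (a' ^ i * r1 * c ^ k) + (c - c') * (a' ^ i * b' ^ j * r2)"
    unfolding r by (simp add: mult_ac)
  finally show ?thesis by blast
qed

lemma eval_map_diff_factors:
  fixes a b c a' b' c' :: "'b::comm_ring_1"
  shows "\<exists>q0 q1 q2. eval_map \<phi> (a, b, c) H - eval_map \<phi> (a', b', c') H = (a - a') * q0 + (b - b') * q1 + (c - c') * q2"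
proof -
  obtain q0 q1 q2 where q: "\<And>m. mon_val m (a, b, c) - mon_val m (a', b', c') = (a - a') * q0 m + (b - b') * q1 m + (c - c') * q2 m"
    using mon_val_diff_factors by metis
  let ?w = "\<lambda>m. \<phi> (Poly_Mapping.lookup H m)"
  have "eval_map \<phi> (a, b, c) H - eval_map \<phi> (a', b', c') H
      = (\<Sum>m\<in>Poly_Mapping.keys H. ?w m * (mon_val m (a, b, c) - mon_val m (a', b', c')))"
    by (simp add: eval_map_def algebra_simps sum_subtractf)
  also have "\<dots> = (\<Sum>m\<in>Poly_Mapping.keys H.
      (a - a') * (?w m * q0 m) + (b - b') * (?w m * q1 m) + (c - c') * (?w m * q2 m))"
    by (intro sum.cong refl) (simp add: q algebra_simps)
  also have "\<dots> = (a - a') * (\<Sum>m\<in>Poly_Mapping.keys H. ?w m * q0 m)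
      + (b - b') * (\<Sum>m\<in>Poly_Mapping.keys H. ?w m * q1 m) + (c - c') * (\<Sum>m\<in>Poly_Mapping.keys H. ?w m * q2 m)"
    by (simp add: sum.distrib sum_distrib_left)
  finally show ?thesis by blast
qed

lemma remainder_X0:
  fixes H :: "'a::comm_ring_1 poly3"
  shows "\<exists>Q. H = (X0 - A) * Q + psubst A X1 X2 H"
  using eval_map_diff_factors[of cst X0 X1 X2 H A X1 X2] by (simp add: psubst_X algebra_simps)

lemma remainder_X1:
  fixes H :: "'a::comm_ring_1 poly3"
  shows "\<exists>Q. H = (X1 - B) * Q + psubst X0 B X2 H"
  using eval_map_diff_factors[of cst X0 X1 X2 H X0 B X2] by (simp add: psubst_X algebra_simps)

lemma keys_power_subset:
  assumes "0 \<in> S" "\<And>x y. x \<in> S \<Longrightarrow> y \<in> S \<Longrightarrow> x + y \<in> S" "Poly_Mapping.keys F \<subseteq> S"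
  shows "Poly_Mapping.keys (F ^ n) \<subseteq> S"
proof (induction n)
  case (Suc n)
  have "Poly_Mapping.keys (F * F ^ n) \<subseteq> S"
    using keys_mult[of F "F ^ n"] Suc.IH assms(2,3) by blast
  then show ?case by simp
qed (use assms in \<open>simp add: keys_one\<close>)

lemma keys_psubst_subset:
  assumes "0 \<in> S" "\<And>x y. x \<in> S \<Longrightarrow> y \<in> S \<Longrightarrow> x + y \<in> S"
    and "Poly_Mapping.keys A \<subseteq> S" "Poly_Mapping.keys B \<subseteq> S" "Poly_Mapping.keys C \<subseteq> S"
  shows "Poly_Mapping.keys (psubst A B C H) \<subseteq> S"
proof -
  have mult: "Poly_Mapping.keys (F * G) \<subseteq> S" if "Poly_Mapping.keys F \<subseteq> S" "Poly_Mapping.keys G \<subseteq> S" for F G :: "'a poly3"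
    using keys_mult[of F G] that assms(2) by blast
  have "Poly_Mapping.keys (cst (Poly_Mapping.lookup H m) * mon_val m (A, B, C)) \<subseteq> S" for m
    unfolding mon_val_def
    by (intro mult keys_power_subset) (use assms in \<open>auto simp: cst_def\<close>)
  then show ?thesis
    unfolding eval_map_def using keys_sum by fastforce
qed

definition y_free :: "mon3 set" where "y_free = {m. fst (snd m) = 0}"
definition z_only :: "mon3 set" where "z_only = {m. fst m = 0 \<and> fst (snd m) = 0}"

lemma keys_X [simp]:
  "Poly_Mapping.keys (X0 :: 'a::zero_neq_one poly3) = {(1, 0, 0)}"
  "Poly_Mapping.keys (X1 :: 'a poly3) = {(0, 1, 0)}"
  "Poly_Mapping.keys (X2 :: 'a poly3) = {(0, 0, 1)}"
  by (simp_all add: X0_def X1_def X2_def)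

lemma keys_cst_mult_X2: "Poly_Mapping.keys (cst c * X2 :: 'a::comm_semiring_1 poly3) \<subseteq> {(0, 0, 1)}"
  by (simp add: cst_def X2_def mult_single)

lemma keys_psubst_y_free: "Poly_Mapping.keys (psubst X0 (cst c * X2) X2 H) \<subseteq> y_free"
  using keys_cst_mult_X2[of c] by (intro keys_psubst_subset) (auto simp: y_free_def)

lemma keys_psubst_0_y_free: "Poly_Mapping.keys (psubst X0 0 X2 H) \<subseteq> y_free"
  by (intro keys_psubst_subset) (auto simp: y_free_def)

lemma psubst_y_free_eq:
  assumes "Poly_Mapping.keys K \<subseteq> y_free"
  shows "psubst X0 0 X2 K = K"
proof -
  have "psubst X0 0 X2 K = psubst X0 X1 X2 K"
    unfolding eval_map_def by (intro sum.cong refl) (use assms in \<open>auto simp: y_free_def mon_val_def\<close>)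
  then show ?thesis by (simp add: psubst_X)
qed

lemma keys_psubst_z_only:
  assumes "Poly_Mapping.keys K \<subseteq> y_free"
  shows "Poly_Mapping.keys (psubst (cst c * X2) X1 X2 K) \<subseteq> z_only"
proof -
  have "psubst (cst c * X2) X1 X2 K = psubst (cst c * X2) 0 X2 K"
    using eval_map_psubst[of cst "(cst c * X2, X1, X2)" X0 0 X2 K] by (simp add: psubst_y_free_eq[OF assms])
  also have "Poly_Mapping.keys \<dots> \<subseteq> z_only"
    using keys_cst_mult_X2[of c] by (intro keys_psubst_subset) (auto simp: z_only_def)
  finally show ?thesis .
qed

lemma z_only_eq_0:
  fixes K :: "'a::field_char_0 poly3"
  assumes keys: "Poly_Mapping.keys K \<subseteq> z_only" and vanish: "\<And>l. l \<noteq> 0 \<Longrightarrow> peval K (0, 0, l) = 0"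
  shows "K = 0"
proof (rule ccontr)
  assume "K \<noteq> 0"
  then obtain m where m: "m \<in> Poly_Mapping.keys K" using keys_eq_empty by blast
  have "peval K (0, 0, l) = (\<Sum>m\<in>Poly_Mapping.keys K. Poly_Mapping.lookup K m * l ^ snd (snd m))" for l
    unfolding eval_map_def by (intro sum.cong refl) (use keys in \<open>auto simp: z_only_def mon_val_def\<close>)
  then have "(\<Sum>m'\<in>{m'\<in>Poly_Mapping.keys K. snd (snd m') = snd (snd m)}. Poly_Mapping.lookup K m') = 0"
    using vanish by (intro sum_coeffs_eq_0_if_vanishes) auto
  moreover have "{m'\<in>Poly_Mapping.keys K. snd (snd m') = snd (snd m)} = {m}"
  proof -
    have zero: "fst m' = 0 \<and> fst (snd m') = 0" if "m' \<in> Poly_Mapping.keys K" for m'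
      using keys that by (auto simp: z_only_def)
    show ?thesis using m zero[OF m] by (auto dest: zero simp: prod_eq_iff)
  qed
  ultimately show False using m by (simp add: in_keys_iff)
qed

definition vline :: "nat \<Rightarrow> 'a::comm_ring_1 poly3" where
  "vline j = X0 - cst (of_nat j) * X2"

definition vlines :: "nat \<Rightarrow> 'a::comm_ring_1 poly3" where
  "vlines m = (\<Prod>j<m. vline j)"

definition hline :: "'a::comm_ring_1 \<Rightarrow> 'a poly3" where
  "hline c = X1 - cst c * X2"

lemma peval_lines [simp]:
  "peval (vline j) (a, b, z) = a - of_nat j * z"
  "peval (vlines m) (a, b, z) = (\<Prod>j<m. a - of_nat j * z)"
  "peval (hline c) (a, b, z) = b - c * z"
  by (simp_all add: vline_def vlines_def hline_def)

lemma psubst_vlines [simp]: "psubst X0 B X2 (vlines m) = vlines m"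
  by (simp add: vlines_def vline_def)

lemma homog_of_deg_vlines: "homog_of_deg m (vlines m :: 'a::comm_ring_1 poly3)"
proof -
  have "\<And>j. homog_of_deg 1 (vline j :: 'a poly3)" unfolding vline_def by (rule homog_of_deg_linear)
  from homog_of_deg_prod[of "{..<m}" "\<lambda>_. 1", OF this] show ?thesis by (simp add: vlines_def)
qed

lemma homog_of_deg_hline: "homog_of_deg 1 (hline c)"
  unfolding hline_def by (rule homog_of_deg_linear)

lemma vlines_vanish:
  assumes "j < m" shows "peval (vlines m) (of_nat j * z, b, z) = 0"
  unfolding peval_lines by (intro prod_zero bexI[of _ j]) (use assms in auto)

text \<open>Divide by one \<open>x - j z\<close> at a time: the remainder is a polynomial in z alone vanishing
  at \<open>(0 : 0 : 1)\<close>, hence zero, and the quotient can be taken free of y again.\<close>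
lemma prod_vline_dvd:
  fixes K :: "'a::field_char_0 poly3"
  assumes "finite J" "Poly_Mapping.keys K \<subseteq> y_free"
    and "\<And>j l w. j \<in> J \<Longrightarrow> l \<noteq> 0 \<Longrightarrow> peval K (l * of_nat j, w, l) = 0"
  shows "(\<Prod>j\<in>J. vline j) dvd K"
  using assms
proof (induction J arbitrary: K rule: finite_induct)
  case (insert j J)
  let ?A = "cst (of_nat j) * X2 :: 'a poly3"
  obtain Q where Q: "K = vline j * Q + psubst ?A X1 X2 K"
    using remainder_X0 unfolding vline_def by blast
  have "psubst ?A X1 X2 K = 0"
  proof (rule z_only_eq_0)
    show "Poly_Mapping.keys (psubst ?A X1 X2 K) \<subseteq> z_only"
      using keys_psubst_z_only[OF insert.prems(1)] .
    show "peval (psubst ?A X1 X2 K) (0, 0, l) = 0" if "l \<noteq> 0" for l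
      using insert.prems(2)[of j l 0] that by (simp add: eval_map_psubst mult.commute)
  qed
  with Q have KQ: "K = vline j * Q" by simp
  define Q' where "Q' = psubst X0 0 X2 Q"
  have KQ': "K = vline j * Q'"
    using arg_cong[OF KQ, of "psubst X0 0 X2"] psubst_y_free_eq[OF insert.prems(1)]
    by (simp add: Q'_def vline_def)
  have "(\<Prod>j\<in>J. vline j) dvd Q'"
  proof (rule insert.IH)
    show "Poly_Mapping.keys Q' \<subseteq> y_free" unfolding Q'_def by (rule keys_psubst_0_y_free)
    fix j' l w assume j': "j' \<in> J" and l: "l \<noteq> (0::'a)"
    have "(l * (of_nat j' - of_nat j)) * peval Q' (l * of_nat j', w, l) = peval K (l * of_nat j', w, l)"
      by (subst KQ') (simp add: algebra_simps)
    also have "\<dots> = 0" using insert.prems(2)[of j' l w] j' l by simp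
    finally show "peval Q' (l * of_nat j', w, l) = 0"
      using j' l insert.hyps(2) by auto
  qed
  then show ?case using KQ' insert.hyps by (simp add: mult_dvd_mono)
qed simp

section \<open>Adding a row by a basic double link\<close>

lemma vlines_ne_0: "vlines m \<noteq> (0 :: 'a::field_char_0 poly3)"
proof
  assume "vlines m = (0 :: 'a poly3)"
  then have "peval (vlines m) (-1, 0, 1 :: 'a) = 0" by simp
  moreover have "(-1 - of_nat j * 1 :: 'a) \<noteq> 0" for j
  proof -
    have "(-1 - of_nat j * 1 :: 'a) = - of_nat (Suc j)" by simp
    then show ?thesis by (simp only: neg_equal_0_iff_equal of_nat_eq_0_iff)
  qed
  ultimately show False by (simp add: prod_zero_iff)
qed

lemma hline_ne_0: "hline c \<noteq> (0 :: 'a::field_char_0 poly3)"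
proof
  assume "hline c = 0"
  then have "peval (hline c) (0, 1, 0 :: 'a) = 0" by simp
  then show False by simp
qed

lemma regular_seq2_vlines_hline:
  assumes "0 < m"
  shows "regular_seq2 (vlines m) (hline c :: 'a::field_char_0 poly3)"
  unfolding regular_seq2_def
proof (intro conjI allI impI)
  let ?F = "vlines m :: 'a poly3" and ?G = "hline c"
  show "H = 0" if "?F * H = 0" for H
    using that vlines_ne_0[of m] by auto
  show "H \<in> principal ?F" if GH: "?G * H \<in> principal ?F" for H
  proof -
    obtain K where K: "?G * H = ?F * K" using GH unfolding principal_def by blast
    have "?F * psubst X0 (cst c * X2) X2 K = psubst X0 (cst c * X2) X2 (?G * H)"
      by (simp add: K)
    also have "\<dots> = 0" by (simp add: hline_def)
    finally have "psubst X0 (cst c * X2) X2 K = 0" using vlines_ne_0[of m] by auto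
    moreover obtain Q where "K = ?G * Q + psubst X0 (cst c * X2) X2 K"
      using remainder_X1[of K "cst c * X2"] unfolding hline_def by blast
    ultimately have "?G * H = ?G * (?F * Q)" using K by (simp add: mult_ac)
    then have "H = ?F * Q" using hline_ne_0[of c] by simp
    then show ?thesis unfolding principal_def by blast
  qed
  show "1 \<notin> {?F * A + ?G * B | A B. True}"
  proof
    assume "1 \<in> {?F * A + ?G * B | A B. True}"
    then obtain A B where "1 = ?F * A + ?G * B" by blast
    then have "peval (1 :: 'a poly3) (0, 0, 0) = peval (?F * A + ?G * B) (0, 0, 0)" by simp
    then show False using assms by (simp add: zero_power)
  qed
qed

definition row :: "nat \<Rightarrow> 'a::comm_semiring_1 \<Rightarrow> 'a pt set" where
  "row m c = {(of_nat j, c, 1) | j. j < m}"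

locale new_row =
  fixes Y :: "'a::field_char_0 pt set" and m :: nat and c :: 'a
  assumes Y_off_row: "\<And>P. P \<in> Y \<Longrightarrow> \<exists>j<m. \<exists>y. y \<noteq> c \<and> P = (of_nat j, y, 1)"
begin

lemma vlines_in_ideal: "vlines m \<in> ideal_of_points Y"
  unfolding homog_in_ideal_of_points_iff[OF homog_of_deg_vlines]
proof
  fix P assume "P \<in> Y"
  then obtain j y where "j < m" "P = (of_nat j, y, 1)" using Y_off_row by blast
  then show "peval (vlines m) P = 0" using vlines_vanish[of j m 1 y] by simp
qed

lemma ideal_of_points_row_subset_bdl_ideal: "ideal_of_points (Y \<union> row m c) \<subseteq> bdl_ideal (ideal_of_points Y) (vlines m) (hline c)"
proof
  fix H assume H: "H \<in> ideal_of_points (Y \<union> row m c)"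
  let ?R = "psubst X0 (cst c * X2) X2 H"
  obtain Q where Q: "H = hline c * Q + ?R" using remainder_X1 unfolding hline_def by blast
  have "(\<Prod>j\<in>{..<m}. vline j) dvd ?R"
  proof (rule prod_vline_dvd)
    show "Poly_Mapping.keys ?R \<subseteq> y_free" by (rule keys_psubst_y_free)
    fix j l w assume "j \<in> {..<m}" "(l::'a) \<noteq> 0"
    then have "peval H (pt_scale l (of_nat j, c, 1)) = 0"
      using H by (intro peval_pt_scale_eq_0) (auto simp: row_def)
    then show "peval ?R (l * of_nat j, w, l) = 0" by (simp add: eval_map_psubst mult.commute)
  qed simp
  then obtain B where B: "?R = vlines m * B" by (auto simp: vlines_def)
  have "Q \<in> ideal_of_points Y"
    unfolding in_ideal_of_points_iff
  proof (intro ballI allI impI)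
    fix P and l :: 'a assume P: "P \<in> Y" and l: "l \<noteq> 0"
    obtain j y where y: "y \<noteq> c" "P = (of_nat j, y, 1)" using Y_off_row[OF P] by blast
    have "peval (hline c) (pt_scale l P) * peval Q (pt_scale l P) = peval H (pt_scale l P)"
      using peval_pt_scale_eq_0[OF vlines_in_ideal P l] by (subst Q) (simp add: B)
    also have "\<dots> = 0" using peval_pt_scale_eq_0[OF H _ l] P by simp
    moreover have "peval (hline c) (pt_scale l P) = l * (y - c)" by (simp add: y algebra_simps)
    ultimately show "peval Q (pt_scale l P) = 0" using y(1) l by simp
  qed
  moreover have "H = hline c * Q + vlines m * B" using Q B by simp
  ultimately show "H \<in> bdl_ideal (ideal_of_points Y) (vlines m) (hline c)"
    unfolding bdl_ideal_def by blast
qed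

lemma bdl_ideal_subset_ideal_of_points_row: "bdl_ideal (ideal_of_points Y) (vlines m) (hline c) \<subseteq> ideal_of_points (Y \<union> row m c)"
proof
  fix H assume "H \<in> bdl_ideal (ideal_of_points Y) (vlines m) (hline c)"
  then obtain A B where H: "H = hline c * A + vlines m * B" and A: "A \<in> ideal_of_points Y"
    by (auto simp: bdl_ideal_def)
  show "H \<in> ideal_of_points (Y \<union> row m c)"
    unfolding in_ideal_of_points_iff
  proof (intro ballI allI impI)
    fix P and l :: 'a assume P: "P \<in> Y \<union> row m c" and l: "l \<noteq> 0"
    have "(peval (hline c) (pt_scale l P) = 0 \<or> peval A (pt_scale l P) = 0) \<and> peval (vlines m) (pt_scale l P) = 0"
    proof (cases "P \<in> Y")
      case True
      then show ?thesis using peval_pt_scale_eq_0[OF A True l] peval_pt_scale_eq_0[OF vlines_in_ideal True l] by blast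
    next
      case False
      then obtain j where j: "j < m" "P = (of_nat j, c, 1)" using P by (auto simp: row_def)
      then have "pt_scale l P = (of_nat j * l, l * c, l)" by (simp add: mult.commute)
      then show ?thesis using vlines_vanish[OF j(1), of l "l * c"] by simp
    qed
    then show "peval H (pt_scale l P) = 0"
      unfolding H by (auto simp del: peval_lines)
  qed
qed

lemma basic_double_link_row:
  assumes "0 < m"
  shows "basic_double_link (ideal_of_points (Y \<union> row m c)) (ideal_of_points Y)"
  unfolding basic_double_link_def homogeneous_def
proof (intro exI conjI)
  show "ideal_of_points (Y \<union> row m c) = bdl_ideal (ideal_of_points Y) (vlines m) (hline c)"
    using ideal_of_points_row_subset_bdl_ideal bdl_ideal_subset_ideal_of_points_row by (rule equalityI)
qed (use homog_of_deg_vlines homog_of_deg_hline vlines_in_ideal regular_seq2_vlines_hline[OF assms] in auto)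

end

definition first_rows :: "nat list \<Rightarrow> nat \<Rightarrow> 'a::comm_semiring_1 pt set" where
  "first_rows ms k = {(of_nat j, of_nat (length ms - i), 1) | i j. 1 \<le> i \<and> i \<le> k \<and> j < ms ! (i - 1)}"

lemma first_rows_0: "first_rows ms 0 = {}"
  by (auto simp: first_rows_def)

lemma first_rows_length: "first_rows ms (length ms) = std_config ms"
  by (simp add: first_rows_def std_config_def)

lemma first_rows_Suc:
  "first_rows ms (Suc k) = first_rows ms k \<union> row (ms ! k) (of_nat (length ms - Suc k))"
  unfolding row_def
proof (intro equalityI subsetI)
  fix x assume "x \<in> first_rows ms (Suc k)"
  then obtain i j where "x = (of_nat j, of_nat (length ms - i), 1)" "1 \<le> i" "i \<le> Suc k" "j < ms ! (i - 1)"
    by (auto simp: first_rows_def)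
  then show "x \<in> first_rows ms k \<union> {(of_nat j, of_nat (length ms - Suc k), 1) | j. j < ms ! k}"
    unfolding first_rows_def by (cases "i = Suc k") auto
next
  fix x assume "x \<in> first_rows ms k \<union> {(of_nat j, of_nat (length ms - Suc k), 1) | j. j < ms ! k}"
  then show "x \<in> first_rows ms (Suc k)"
  proof
    assume "x \<in> first_rows ms k"
    then show ?thesis unfolding first_rows_def by fastforce
  next
    assume "x \<in> {(of_nat j, of_nat (length ms - Suc k), 1) | j. j < ms ! k}"
    then obtain j where "x = (of_nat j, of_nat (length ms - Suc k), 1)" "j < ms ! k" by blast
    then show ?thesis unfolding first_rows_def by (intro CollectI exI[of _ "Suc k"] exI[of _ j]) simp
  qed
qed

lemma obtainable_by_bdl_std_config:
  assumes "pseudo_type_vector ms"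
  shows "obtainable_by_bdl (ideal_of_points (std_config ms :: 'a::field_char_0 pt set))"
proof -
  have pos: "\<And>x. x \<in> set ms \<Longrightarrow> 0 < x" and sorted: "sorted ms"
    using assms by (auto simp: pseudo_type_vector_def)
  define Is where "Is k = ideal_of_points (first_rows ms k :: 'a pt set)" for k
  have "basic_double_link (Is (Suc k)) (Is k)" if k: "k < length ms" for k
  proof -
    interpret new_row "first_rows ms k :: 'a pt set" "ms ! k" "of_nat (length ms - Suc k)"
    proof
      fix P :: "'a pt" assume "P \<in> first_rows ms k"
      then obtain i j where P: "P = (of_nat j, of_nat (length ms - i), 1)" "1 \<le> i" "i \<le> k" "j < ms ! (i - 1)"
        by (auto simp: first_rows_def)
      have "ms ! (i - 1) \<le> ms ! k" using sorted k P by (intro sorted_nth_mono) auto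
      then have "j < ms ! k" using P(4) by simp
      moreover have "(of_nat (length ms - i) :: 'a) \<noteq> of_nat (length ms - Suc k)"
        using P(2,3) k by (simp only: of_nat_eq_iff)
      ultimately show "\<exists>j<ms ! k. \<exists>y. y \<noteq> of_nat (length ms - Suc k) \<and> P = (of_nat j, y, 1)"
        using P(1) by blast
    qed
    show ?thesis
      using basic_double_link_row pos k by (simp add: Is_def first_rows_Suc)
  qed
  moreover have "Is 0 = UNIV" by (simp add: Is_def first_rows_0 ideal_of_points_def)
  moreover have "Is (length ms) = ideal_of_points (std_config ms)" by (simp add: Is_def first_rows_length)
  ultimately show ?thesis unfolding obtainable_by_bdl_def by blast
qed

section \<open>Hilbert function of a staircase of lattice points\<close>

context vector_space
begin

lemma independent_Un_if_independent_mod: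
  assumes K: "subspace K" and BK: "BK \<subseteq> K" "independent BK" "finite BK" and BW: "finite BW"
    and ind: "\<And>c. (\<Sum>b\<in>BW. c b *s b) \<in> K \<Longrightarrow> \<forall>b\<in>BW. c b = 0"
  shows "BK \<inter> BW = {}" "independent (BK \<union> BW)"
proof -
  show disj: "BK \<inter> BW = {}"
  proof (rule ccontr)
    assume "BK \<inter> BW \<noteq> {}"
    then obtain b where b: "b \<in> BK" "b \<in> BW" by blast
    have "(\<Sum>x\<in>BW. (if x = b then 1 else 0) *s x) = (\<Sum>x\<in>BW. if x = b then x else 0)"
      by (intro sum.cong refl) simp
    also have "\<dots> = b" using BW b(2) by simp
    finally have "(\<Sum>x\<in>BW. (if x = b then 1 else 0) *s x) = b" .
    then have "(\<Sum>x\<in>BW. (if x = b then 1 else 0) *s x) \<in> K" using b BK(1) by auto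
    then show False using ind b(2) by fastforce
  qed
  show "independent (BK \<union> BW)"
  proof (rule independent_if_scalars_zero)
    show "finite (BK \<union> BW)" using BK(3) BW by simp
    fix f x assume sum0: "(\<Sum>x\<in>BK \<union> BW. f x *s x) = 0" and x: "x \<in> BK \<union> BW"
    have split: "(\<Sum>x\<in>BK \<union> BW. f x *s x) = (\<Sum>x\<in>BK. f x *s x) + (\<Sum>x\<in>BW. f x *s x)"
      using BK(3) BW disj by (rule sum.union_disjoint)
    have "(\<Sum>x\<in>BK. f x *s x) \<in> K"
      using BK(1) K by (intro subspace_sum subspace_scale) auto
    then have "(\<Sum>x\<in>BW. f x *s x) \<in> K"
      using sum0 split subspace_neg[OF K] by (metis add.commute add_eq_0_iff)
    then have fW: "\<forall>b\<in>BW. f b = 0" using ind by blast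
    then have "(\<Sum>x\<in>BK. f x *s x) = 0" using sum0 split by simp
    then have "\<forall>b\<in>BK. f b = 0"
      using BK(2,3) unfolding independent_explicit_finite_subsets by blast
    then show "f x = 0" using x fW by blast
  qed
qed

lemma dim_eq_dim_add_card_if_independent_mod:
  assumes K: "subspace K" "K \<subseteq> V" and BW: "BW \<subseteq> V" "finite BW"
    and T: "finite T" "V \<subseteq> span T"
    and VKW: "V \<subseteq> {k + w | k w. k \<in> K \<and> w \<in> span BW}"
    and ind: "\<And>c. (\<Sum>b\<in>BW. c b *s b) \<in> K \<Longrightarrow> \<forall>b\<in>BW. c b = 0"
  shows "dim V = dim K + card BW"
proof -
  obtain BK where BK: "BK \<subseteq> K" "independent BK" "K \<subseteq> span BK" "card BK = dim K"
    using basis_exists by blast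
  have "finite BK" using independent_span_bound[OF T(1) BK(2)] BK(1) K(2) T(2) by blast
  note BW_BK = independent_Un_if_independent_mod[OF K(1) BK(1,2) this BW(2) ind]
  have "V \<subseteq> span (BK \<union> BW)"
  proof
    fix v assume "v \<in> V"
    then obtain k w where v: "v = k + w" "k \<in> K" "w \<in> span BW" using VKW by blast
    then show "v \<in> span (BK \<union> BW)"
      using BK(3) span_mono[of BK "BK \<union> BW"] span_mono[of BW "BK \<union> BW"] span_add by blast
  qed
  then have "card (BK \<union> BW) = dim V"
    using BK(1) K(2) BW(1) BW_BK(2) by (intro basis_card_eq_dim) auto
  then show ?thesis using card_Un_disjoint[OF \<open>finite BK\<close> BW(2) BW_BK(1)] BK(4) by simp
qed

end

definition falling :: "'a::comm_ring_1 \<Rightarrow> nat \<Rightarrow> 'a" where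
  "falling x i = (\<Prod>k<i. x - of_nat k)"

lemma power_eq_sum_falling: "\<exists>c. \<forall>x::'a::comm_ring_1. x ^ a = (\<Sum>i\<le>a. c i * falling x i)"
proof (induction a)
  case 0
  show ?case by (rule exI[of _ "\<lambda>_. 1"]) (simp add: falling_def)
next
  case (Suc a)
  then obtain c where c: "\<And>x::'a. x ^ a = (\<Sum>i\<le>a. c i * falling x i)" by blast
  define c' where "c' i = (if i = 0 then 0 else c (i - 1)) + (if i \<le> a then of_nat i * c i else 0)" for i
  have "x ^ Suc a = (\<Sum>i\<le>Suc a. c' i * falling x i)" for x :: 'a
  proof -
    have step: "x * falling x i = falling x (Suc i) + of_nat i * falling x i" for i
      by (simp add: falling_def algebra_simps)
    have "x ^ Suc a = (\<Sum>i\<le>a. c i * (x * falling x i))"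
      by (simp add: c sum_distrib_left mult_ac)
    also have "\<dots> = (\<Sum>i\<le>a. c i * falling x (Suc i)) + (\<Sum>i\<le>a. of_nat i * c i * falling x i)"
      by (simp add: step distrib_left sum.distrib mult_ac)
    also have "(\<Sum>i\<le>a. c i * falling x (Suc i)) = (\<Sum>i\<le>Suc a. (if i = 0 then 0 else c (i - 1)) * falling x i)"
      by (subst sum.atMost_Suc_shift) simp
    also have "(\<Sum>i\<le>a. of_nat i * c i * falling x i) = (\<Sum>i\<le>Suc a. (if i \<le> a then of_nat i * c i else 0) * falling x i)"
      by (simp add: sum.atMost_Suc)
    finally show ?thesis by (simp add: c'_def sum.distrib distrib_right)
  qed
  then show ?case by blast
qed

lemma power2_eq_sum_falling:
  "\<exists>C. \<forall>x y::'a::comm_ring_1. x ^ a * y ^ b = (\<Sum>s\<in>{..a}\<times>{..b}. C s * (falling x (fst s) * falling y (snd s)))"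
proof -
  obtain c where c: "\<And>x::'a. x ^ a = (\<Sum>i\<le>a. c i * falling x i)" using power_eq_sum_falling by blast
  obtain d where d: "\<And>x::'a. x ^ b = (\<Sum>i\<le>b. d i * falling x i)" using power_eq_sum_falling by blast
  have "x ^ a * y ^ b = (\<Sum>s\<in>{..a}\<times>{..b}. (c (fst s) * d (snd s)) * (falling x (fst s) * falling y (snd s)))"
    for x y :: 'a
    unfolding c d sum_product sum.cartesian_product by (intro sum.cong refl) (auto simp: mult_ac)
  then show ?thesis by (intro exI[of _ "\<lambda>s. c (fst s) * d (snd s)"] allI)
qed

lemma falling_of_nat_eq_0_iff: "falling (of_nat j :: 'a::field_char_0) i = 0 \<longleftrightarrow> j < i"
  by (auto simp: falling_def prod_zero_iff)

text \<open>\<open>falling (of_nat p) s\<close> vanishes unless \<open>s \<le> p\<close>, so the matrix of values is triangular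
  for the componentwise order, with nonzero diagonal.\<close>
lemma falling_lattice_independent:
  fixes c :: "nat \<times> nat \<Rightarrow> 'a::field_char_0"
  assumes "finite S"
    and vanish: "\<And>p. p \<in> S \<Longrightarrow> (\<Sum>s\<in>S. c s * (falling (of_nat (fst p)) (fst s) * falling (of_nat (snd p)) (snd s))) = 0"
  shows "\<forall>s\<in>S. c s = 0"
proof -
  have "\<forall>s\<in>S. fst s + snd s = n \<longrightarrow> c s = 0" for n
  proof (induction n rule: less_induct)
    case (less n)
    show ?case
    proof (intro ballI impI)
      fix s assume s: "s \<in> S" and n: "fst s + snd s = n"
      let ?g = "\<lambda>s'. c s' * (falling (of_nat (fst s) :: 'a) (fst s') * falling (of_nat (snd s)) (snd s'))"
      have others: "?g s' = 0" if s': "s' \<in> S - {s}" for s'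
      proof (cases "fst s' \<le> fst s \<and> snd s' \<le> snd s")
        case True
        then have "fst s' + snd s' < n" using s' n by (auto simp: prod_eq_iff)
        then show ?thesis using less.IH s' by auto
      qed (auto simp: falling_of_nat_eq_0_iff)
      have "(\<Sum>s'\<in>S. ?g s') = ?g s + (\<Sum>s'\<in>S - {s}. ?g s')"
        by (rule sum.remove[OF assms(1) s])
      also have "(\<Sum>s'\<in>S - {s}. ?g s') = 0" by (intro sum.neutral) (use others in blast)
      finally have "?g s = 0" using vanish[OF s] by simp
      then show "c s = 0" by (simp add: falling_of_nat_eq_0_iff)
    qed
  qed
  then show ?thesis by blast
qed

lemma pscale_eq_cst_mult: "pscale c F = cst c * F"
  by (simp add: pscale_def cst_def mult_map_scale_conv_mult)

interpretation pv: vector_space "pscale :: 'a::field \<Rightarrow> 'a poly3 \<Rightarrow> 'a poly3"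
  by unfold_locales (simp_all add: pscale_eq_cst_mult is_ring_homD[OF is_ring_hom_cst] algebra_simps)

lemma single_eq_pscale: "Poly_Mapping.single m v = pscale v (Poly_Mapping.single m (1::'a::field))"
  by (simp add: pscale_eq_cst_mult cst_def mult_single)

lemma Rdeg_subset_span_monomials:
  "Rdeg t \<subseteq> pv.span ((\<lambda>m. Poly_Mapping.single m (1::'a::field)) ` {m. mdeg m = t})"
proof
  fix H :: "'a poly3" assume "H \<in> Rdeg t"
  then have "(\<Sum>m\<in>Poly_Mapping.keys H. pscale (Poly_Mapping.lookup H m) (Poly_Mapping.single m 1))
      \<in> pv.span ((\<lambda>m. Poly_Mapping.single m (1::'a::field)) ` {m. mdeg m = t})"
    by (intro pv.span_sum pv.span_scale pv.span_base) (auto simp: Rdeg_def homog_of_deg_def)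
  then show "H \<in> pv.span ((\<lambda>m. Poly_Mapping.single m 1) ` {m. mdeg m = t})"
    by (simp flip: single_eq_pscale add: sum_single_lookup)
qed

lemma finite_mdeg_eq: "finite {m. mdeg m = t}"
  by (rule finite_subset[of _ "{..t} \<times> {..t} \<times> {..t}"]) (auto simp: mdeg_def)

lemma subspace_Rdeg: "pv.subspace (Rdeg t :: 'a::field poly3 set)"
  unfolding pv.subspace_def Rdeg_def
  using homog_of_deg_add homog_of_deg_mult[OF homog_of_deg_cst, where 'a = 'a]
  by (auto simp: pscale_eq_cst_mult)

lemma subspace_ideal_of_points: "pv.subspace (ideal_of_points (X :: 'a::field_char_0 pt set))"
  unfolding pv.subspace_def by (auto simp: in_ideal_of_points_iff pscale_eq_cst_mult)

definition down_closed :: "(nat \<times> nat) set \<Rightarrow> bool" where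
  "down_closed D \<longleftrightarrow> (\<forall>a b a' b'. (a, b) \<in> D \<longrightarrow> a' \<le> a \<longrightarrow> b' \<le> b \<longrightarrow> (a', b') \<in> D)"

definition lattice_pt :: "nat \<times> nat \<Rightarrow> 'a::comm_semiring_1 pt" where
  "lattice_pt s = (of_nat (fst s), of_nat (snd s), 1)"

definition staircase_form :: "nat \<Rightarrow> nat \<times> nat \<Rightarrow> 'a::comm_ring_1 poly3" where
  "staircase_form t s = vlines (fst s) * (\<Prod>k<snd s. hline (of_nat k)) * X2 ^ (t - fst s - snd s)"

lemma peval_staircase_form:
  "peval (staircase_form t s) (lattice_pt p) = falling (of_nat (fst p)) (fst s) * falling (of_nat (snd p)) (snd s)"
  by (simp add: staircase_form_def lattice_pt_def falling_def)

lemma homog_of_deg_staircase_form: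
  assumes "fst s + snd s \<le> t"
  shows "homog_of_deg t (staircase_form t s :: 'a::comm_ring_1 poly3)"
proof -
  have "homog_of_deg (\<Sum>k<snd s. 1) (\<Prod>k<snd s. hline (of_nat k) :: 'a poly3)"
    by (intro homog_of_deg_prod homog_of_deg_hline)
  then have "homog_of_deg (fst s + snd s + (t - fst s - snd s) * 1) (staircase_form t s :: 'a poly3)"
    unfolding staircase_form_def
    by (intro homog_of_deg_mult homog_of_deg_vlines homog_of_deg_power homog_of_deg_X) simp
  then show ?thesis using assms by simp
qed

locale staircase =
  fixes D :: "(nat \<times> nat) set"
  assumes finite_D: "finite D" and down_closed_D: "down_closed D"
begin

definition below :: "nat \<Rightarrow> (nat \<times> nat) set" where
  "below t = {s \<in> D. fst s + snd s \<le> t}"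

lemma finite_below: "finite (below t)"
  using finite_D by (simp add: below_def)

lemma in_ideal_Rdeg_iff:
  "H \<in> ideal_of_points (lattice_pt ` D :: 'a::field_char_0 pt set) \<inter> Rdeg t \<longleftrightarrow>
    homog_of_deg t H \<and> (\<forall>p\<in>D. peval H (lattice_pt p) = 0)"
  using homog_in_ideal_of_points_iff[of t H "lattice_pt ` D"] by (auto simp: Rdeg_def)

lemma peval_sum_staircase_forms:
  "peval (\<Sum>s\<in>S. pscale (c s) (staircase_form t s)) (lattice_pt p)
    = (\<Sum>s\<in>S. c s * (falling (of_nat (fst p)) (fst s) * falling (of_nat (snd p)) (snd s)))"
  by (simp add: pscale_eq_cst_mult peval_staircase_form)

lemma staircase_forms_independent_mod_ideal:
  assumes "(\<Sum>s\<in>below t. pscale (c s) (staircase_form t s)) \<in> ideal_of_points (lattice_pt ` D :: 'a::field_char_0 pt set)"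
  shows "\<forall>s\<in>below t. c s = 0"
proof (rule falling_lattice_independent[OF finite_below])
  fix p assume "p \<in> below t"
  then have "lattice_pt p \<in> (lattice_pt ` D :: 'a pt set)" by (auto simp: below_def)
  from peval_pt_scale_eq_0[OF assms this, of 1]
  show "(\<Sum>s\<in>below t. c s * (falling (of_nat (fst p)) (fst s) * falling (of_nat (snd p)) (snd s))) = (0::'a)"
    by (simp add: peval_sum_staircase_forms)
qed

lemma inj_on_staircase_form: "inj_on (staircase_form t :: nat \<times> nat \<Rightarrow> 'a::field_char_0 poly3) (below t)"
proof
  fix s s' assume s: "s \<in> below t" "s' \<in> below t" and eq: "(staircase_form t s :: 'a poly3) = staircase_form t s'"
  show "s = s'"
  proof (rule ccontr)
    assume "s \<noteq> s'"
    let ?c = "\<lambda>x. if x = s then 1 else if x = s' then -1 else (0::'a)"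
    have "(\<Sum>x\<in>below t. pscale (?c x) (staircase_form t x :: 'a poly3))
        = (\<Sum>x\<in>below t. (if x = s then staircase_form t s else 0) - (if x = s' then staircase_form t s' else 0))"
      using \<open>s \<noteq> s'\<close> by (intro sum.cong refl) (auto simp: pscale_eq_cst_mult cst_def single_uminus)
    also have "\<dots> = 0" using finite_below s eq by (simp add: sum_subtractf)
    finally have "(\<Sum>x\<in>below t. pscale (?c x) (staircase_form t x)) \<in> ideal_of_points (lattice_pt ` D :: 'a pt set)"
      using pv.subspace_0[OF subspace_ideal_of_points] by simp
    then have "\<forall>x\<in>below t. ?c x = 0" by (rule staircase_forms_independent_mod_ideal)
    then show False using s(1) by auto
  qed
qed

text \<open>In the falling factorial expansion of a monomial, the terms indexed outside the staircase
  vanish on it because it is closed downwards.\<close>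
lemma monomial_eq_staircase_combination_on_D:
  assumes "a + b \<le> t"
  shows "\<exists>C. \<forall>p\<in>D. (of_nat (fst p) :: 'a::field_char_0) ^ a * of_nat (snd p) ^ b
    = (\<Sum>s\<in>below t. C s * (falling (of_nat (fst p)) (fst s) * falling (of_nat (snd p)) (snd s)))"
proof -
  obtain C where C: "\<And>x y::'a. x ^ a * y ^ b = (\<Sum>s\<in>{..a}\<times>{..b}. C s * (falling x (fst s) * falling y (snd s)))"
    using power2_eq_sum_falling by blast
  let ?C = "\<lambda>s. if s \<in> {..a}\<times>{..b} then C s else 0"
  have "(of_nat (fst p) :: 'a) ^ a * of_nat (snd p) ^ b
      = (\<Sum>s\<in>below t. ?C s * (falling (of_nat (fst p)) (fst s) * falling (of_nat (snd p)) (snd s)))"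
    if p: "p \<in> D" for p
  proof -
    let ?g = "\<lambda>s. falling (of_nat (fst p) :: 'a) (fst s) * falling (of_nat (snd p)) (snd s)"
    have "?g s = 0" if "s \<in> {..a}\<times>{..b} - below t" for s
    proof -
      have "s \<notin> D" using that assms by (auto simp: below_def)
      then have "\<not> (fst s \<le> fst p \<and> snd s \<le> snd p)"
        using down_closed_D p unfolding down_closed_def by (metis prod.collapse)
      then show ?thesis by (auto simp: falling_of_nat_eq_0_iff)
    qed
    then have "(\<Sum>s\<in>{..a}\<times>{..b}. C s * ?g s) = (\<Sum>s\<in>below t \<inter> ({..a}\<times>{..b}). C s * ?g s)"
      by (intro sum.mono_neutral_right) auto
    also have "\<dots> = (\<Sum>s\<in>below t. ?C s * ?g s)"
      unfolding sum.inter_restrict[OF finite_below] by (intro sum.cong refl) simp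
    finally show ?thesis by (simp add: C)
  qed
  then show ?thesis by (intro exI[of _ ?C]) blast
qed

lemma Rdeg_subset_ideal_plus_span:
  "Rdeg t \<subseteq> {k + w | k w. k \<in> ideal_of_points (lattice_pt ` D :: 'a::field_char_0 pt set) \<inter> Rdeg t
      \<and> w \<in> pv.span (staircase_form t ` below t)}" (is "_ \<subseteq> ?W")
proof -
  have subspace_W: "pv.subspace ?W"
    by (intro pv.subspace_sums pv.subspace_span pv.subspace_inter subspace_ideal_of_points subspace_Rdeg)
  have span_Rdeg: "pv.span (staircase_form t ` below t) \<subseteq> (Rdeg t :: 'a poly3 set)"
    using homog_of_deg_staircase_form
    by (intro pv.span_minimal subspace_Rdeg) (auto simp: Rdeg_def below_def)
  have "Poly_Mapping.single m 1 \<in> ?W" if m: "mdeg m = t" for m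
  proof -
    obtain a b e where abe: "m = (a, b, e)" by (cases m)
    then obtain C where C: "\<And>p. p \<in> D \<Longrightarrow> (of_nat (fst p) :: 'a) ^ a * of_nat (snd p) ^ b
        = (\<Sum>s\<in>below t. C s * (falling (of_nat (fst p)) (fst s) * falling (of_nat (snd p)) (snd s)))"
      using monomial_eq_staircase_combination_on_D[of a b t] m by (auto simp: mdeg_def)
    define w where "w = (\<Sum>s\<in>below t. pscale (C s) (staircase_form t s :: 'a poly3))"
    have w: "w \<in> pv.span (staircase_form t ` below t)"
      unfolding w_def by (intro pv.span_sum pv.span_scale pv.span_base) auto
    have "Poly_Mapping.single m 1 - w \<in> ideal_of_points (lattice_pt ` D) \<inter> Rdeg t"
      unfolding in_ideal_Rdeg_iff
    proof (intro conjI ballI)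
      show "homog_of_deg t (Poly_Mapping.single m 1 - w)"
        using homog_of_deg_single[of m 1] m w span_Rdeg by (intro homog_of_deg_diff) (auto simp: Rdeg_def)
      fix p assume "p \<in> D"
      have "peval w (lattice_pt p) = of_nat (fst p) ^ a * of_nat (snd p) ^ b"
        unfolding w_def peval_sum_staircase_forms using C[OF \<open>p \<in> D\<close>] by simp
      moreover have "peval (Poly_Mapping.single m 1) (lattice_pt p) = of_nat (fst p) ^ a * (of_nat (snd p) :: 'a) ^ b"
        by (simp add: eval_map_single abe mon_val_def lattice_pt_def)
      ultimately show "peval (Poly_Mapping.single m 1 - w) (lattice_pt p) = 0" by simp
    qed
    then show ?thesis using w by force
  qed
  then have "(\<lambda>m. Poly_Mapping.single m 1) ` {m. mdeg m = t} \<subseteq> ?W" by blast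
  from Rdeg_subset_span_monomials pv.span_minimal[OF this subspace_W] show ?thesis
    by (rule order.trans)
qed

lemma hilb_eq_card_below: "hilb (ideal_of_points (lattice_pt ` D :: 'a::field_char_0 pt set)) t = card (below t)"
proof -
  let ?K = "ideal_of_points (lattice_pt ` D :: 'a pt set) \<inter> Rdeg t"
  let ?B = "staircase_form t ` below t :: 'a poly3 set"
  have "pv.dim (Rdeg t :: 'a poly3 set) = pv.dim ?K + card ?B"
  proof (rule pv.dim_eq_dim_add_card_if_independent_mod)
    show "pv.subspace ?K" by (intro pv.subspace_inter subspace_ideal_of_points subspace_Rdeg)
    show "?B \<subseteq> Rdeg t" using homog_of_deg_staircase_form by (auto simp: Rdeg_def below_def)
    show "finite ?B" "finite ((\<lambda>m. Poly_Mapping.single m (1::'a)) ` {m. mdeg m = t})"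
      using finite_below finite_mdeg_eq by simp_all
    show "\<forall>b\<in>?B. c b = 0" if "(\<Sum>b\<in>?B. pscale (c b) b) \<in> ?K" for c
      using that staircase_forms_independent_mod_ideal[of "\<lambda>s. c (staircase_form t s)" t]
      by (simp add: sum.reindex[OF inj_on_staircase_form] comp_def)
    show "Rdeg t \<subseteq> pv.span ((\<lambda>m. Poly_Mapping.single m (1::'a)) ` {m. mdeg m = t})"
      by (rule Rdeg_subset_span_monomials)
    show "Rdeg t \<subseteq> {k + w | k w. k \<in> ?K \<and> w \<in> pv.span ?B}"
      by (rule Rdeg_subset_ideal_plus_span)
  qed blast
  then show ?thesis
    using card_image[OF inj_on_staircase_form] by (simp add: hilb_def kdim_def)
qed

end

definition staircase_of :: "nat list \<Rightarrow> (nat \<times> nat) set" where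
  "staircase_of ms = {(j, length ms - i) | i j. 1 \<le> i \<and> i \<le> length ms \<and> j < ms ! (i - 1)}"

lemma std_config_eq_image: "std_config ms = lattice_pt ` staircase_of ms"
proof -
  have rows: "{f i j | i j. 1 \<le> i \<and> i \<le> length ms \<and> j < ms ! (i - 1)}
      = (\<lambda>(i, j). f i j) ` {(i, j). 1 \<le> i \<and> i \<le> length ms \<and> j < ms ! (i - 1)}" for f :: "nat \<Rightarrow> nat \<Rightarrow> 'b"
    by auto
  show ?thesis
    unfolding std_config_def staircase_of_def rows image_image
    by (intro image_cong refl) (auto simp: lattice_pt_def)
qed

lemma staircase_staircase_of:
  assumes "sorted ms"
  shows "staircase (staircase_of ms)"
proof
  have "staircase_of ms \<subseteq> {..<sum_list ms} \<times> {..length ms}"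
    by (auto simp: staircase_of_def intro!: order.strict_trans2[OF _ elem_le_sum_list])
  then show "finite (staircase_of ms)" by (rule finite_subset) simp
  show "down_closed (staircase_of ms)"
    unfolding down_closed_def
  proof (intro allI impI)
    fix a b a' b' assume "(a, b) \<in> staircase_of ms" and le: "a' \<le> a" "b' \<le> b"
    then obtain i where i: "b = length ms - i" "1 \<le> i" "i \<le> length ms" "a < ms ! (i - 1)"
      by (auto simp: staircase_of_def)
    define i' where "i' = length ms - b'"
    have i': "1 \<le> i'" "i' \<le> length ms" "i \<le> i'" "length ms - i' = b'" using i le by (auto simp: i'_def)
    have "ms ! (i - 1) \<le> ms ! (i' - 1)" using assms i i' by (intro sorted_nth_mono) auto
    then show "(a', b') \<in> staircase_of ms"
      using i i' le unfolding staircase_of_def by (intro CollectI exI[of _ i'] exI[of _ a']) auto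
  qed
qed

text \<open>Row i, the points \<open>[j : p - i : 1]\<close>, has a point on the diagonal \<open>j + (p - i) = t\<close>.\<close>
definition meets_diagonal :: "nat list \<Rightarrow> nat \<Rightarrow> nat \<Rightarrow> bool" where
  "meets_diagonal ms t i \<longleftrightarrow> length ms - i \<le> t \<and> t - (length ms - i) < mval ms i"

lemma card_diagonal_staircase_of:
  "card {s \<in> staircase_of ms. fst s + snd s = t} = card {i \<in> {1..length ms}. meets_diagonal ms t i}"
proof -
  let ?f = "\<lambda>i. (t - (length ms - i), length ms - i)"
  have inj: "inj_on ?f {i \<in> {1..length ms}. meets_diagonal ms t i}"
    by (rule inj_onI) auto
  have image: "?f ` {i \<in> {1..length ms}. meets_diagonal ms t i} = {s \<in> staircase_of ms. fst s + snd s = t}"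
  proof (intro equalityI subsetI)
    fix s assume "s \<in> ?f ` {i \<in> {1..length ms}. meets_diagonal ms t i}"
    then obtain i where "i \<in> {1..length ms}" "meets_diagonal ms t i" "s = ?f i" by blast
    then show "s \<in> {s \<in> staircase_of ms. fst s + snd s = t}"
      unfolding staircase_of_def meets_diagonal_def mval_def
      by (intro CollectI conjI exI[of _ i] exI[of _ "t - (length ms - i)"]) auto
  next
    fix s assume "s \<in> {s \<in> staircase_of ms. fst s + snd s = t}"
    then obtain i j where s: "s = (j, length ms - i)" "1 \<le> i" "i \<le> length ms" "j < ms ! (i - 1)"
      "j + (length ms - i) = t"
      by (auto simp: staircase_of_def)
    then have "i \<in> {i \<in> {1..length ms}. meets_diagonal ms t i}" by (auto simp: meets_diagonal_def mval_def)
    moreover have "s = ?f i" using s by auto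
    ultimately show "s \<in> ?f ` {i \<in> {1..length ms}. meets_diagonal ms t i}" by blast
  qed
  show ?thesis using card_image[OF inj] unfolding image by simp
qed

lemma delta_hilb_std_config:
  assumes "sorted ms"
  shows "delta_hilb (ideal_of_points (std_config ms :: 'a::field_char_0 pt set)) t
    = int (card {i \<in> {1..length ms}. meets_diagonal ms t i})"
proof -
  interpret staircase "staircase_of ms" using staircase_staircase_of[OF assms] .
  have hilb: "hilb (ideal_of_points (std_config ms :: 'a pt set)) u = card (below u)" for u
    unfolding std_config_eq_image by (rule hilb_eq_card_below)
  have "card (below 0) = card {s \<in> staircase_of ms. fst s + snd s = 0}"
    by (rule arg_cong[where f = card]) (auto simp: below_def)
  moreover have "card (below (Suc u)) = card (below u) + card {s \<in> staircase_of ms. fst s + snd s = Suc u}" for u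
  proof -
    have "below (Suc u) = below u \<union> {s \<in> staircase_of ms. fst s + snd s = Suc u}"
      by (auto simp: below_def)
    then show ?thesis using finite_below[of "Suc u"] by (simp add: card_Un_disjoint disjoint_iff below_def)
  qed
  ultimately show ?thesis
    unfolding card_diagonal_staircase_of by (cases t) (simp_all add: delta_hilb_def hilb)
qed

section \<open>The standard O-sequence\<close>

definition run_end :: "nat list \<Rightarrow> nat \<Rightarrow> bool" where
  "run_end ms i \<longleftrightarrow> i = length ms \<or> mval ms i < mval ms (Suc i)"

lemma mval_mono: "sorted ms \<Longrightarrow> i \<le> i' \<Longrightarrow> i' \<le> length ms \<Longrightarrow> mval ms i \<le> mval ms i'"
  by (auto simp: mval_def intro: sorted_nth_mono)

lemma mval_pos: "\<forall>x\<in>set ms. 0 < x \<Longrightarrow> 1 \<le> i \<Longrightarrow> i \<le> length ms \<Longrightarrow> 0 < mval ms i"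
  by (auto simp: mval_def)

text \<open>If \<open>m_(i-1) = m_i\<close>, the shifted sequence \<open>s_i\<close> counts the rows i and i - 1 meeting the
  diagonal; otherwise it counts row i, or nothing when row i is not the last of its run.\<close>
lemma shifted_s_seq_eq:
  assumes "sorted ms" "\<forall>x\<in>set ms. 0 < x" "1 \<le> i" "i \<le> length ms"
  shows "(if length ms - i \<le> t then s_seq ms i (t - (length ms - i)) else 0)
    = (if run_end ms i then of_bool (meets_diagonal ms t i)
         + (if mval ms (i - 1) = mval ms i then of_bool (meets_diagonal ms t (i - 1)) else 0) else 0)"
proof -
  have pos: "0 < mval ms i" using mval_pos[OF assms(2-4)] .
  have "mval ms (i - 1) \<le> mval ms i" using mval_mono[OF assms(1), of "i - 1" i] assms(4) by simp
  then consider "mval ms (i - 1) < mval ms i" | "mval ms (i - 1) = mval ms i" by linarith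
  then show ?thesis
  proof cases
    case 1
    then show ?thesis by (auto simp: s_seq_def Let_def run_end_def meets_diagonal_def)
  next
    case 2
    then have "2 \<le> i" using pos assms(3) by (cases "i = 1") (auto simp: mval_def)
    then have shift: "length ms - (i - 1) = Suc (length ms - i)" using assms(4) by simp
    show ?thesis
    proof (cases "length ms - i \<le> t")
      case True
      define u where "u = t - (length ms - i)"
      have "meets_diagonal ms t i \<longleftrightarrow> u < mval ms i"
        using True by (simp add: meets_diagonal_def u_def)
      moreover have "meets_diagonal ms t (i - 1) \<longleftrightarrow> 1 \<le> u \<and> u \<le> mval ms i"
        using True 2 shift by (auto simp: meets_diagonal_def u_def)
      moreover have "s_seq ms i u = (if run_end ms i then
          (if u = 0 then 1 else if u < mval ms i then 2 else if u = mval ms i then 1 else 0) else 0)"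
        using 2 by (simp add: s_seq_def Let_def run_end_def)
      ultimately show ?thesis
        using True pos 2 unfolding u_def[symmetric] by auto
    next
      case False
      then show ?thesis using shift by (simp add: meets_diagonal_def)
    qed
  qed
qed

lemma run_end_Suc_iff:
  assumes "pseudo_type_vector ms" "1 \<le> j" "j < length ms"
  shows "run_end ms (Suc j) \<and> mval ms j = mval ms (Suc j) \<longleftrightarrow> \<not> run_end ms j"
proof -
  have "mval ms j \<le> mval ms (Suc j)"
    using assms by (intro mval_mono) (auto simp: pseudo_type_vector_def)
  moreover have "mval ms (Suc j) < mval ms (Suc (Suc j))"
    if "mval ms j = mval ms (Suc j)" "Suc j < length ms"
  proof -
    obtain i where j: "j = Suc i" using assms(2) by (cases j) auto
    have "i + 2 < length ms" "ms ! i = ms ! (i + 1)" using that j by (simp_all add: mval_def)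
    then have "ms ! (i + 1) < ms ! (i + 2)" using assms(1) unfolding pseudo_type_vector_def by blast
    then show ?thesis using j by (simp add: mval_def)
  qed
  ultimately show ?thesis using assms(3) by (cases "Suc j = length ms") (auto simp: run_end_def)
qed

lemma std_O_seq_eq_card:
  assumes ptv: "pseudo_type_vector ms"
  shows "std_O_seq ms t = int (card {i \<in> {1..length ms}. meets_diagonal ms t i})"
proof -
  let ?p = "length ms"
  let ?row = "\<lambda>i. of_bool (meets_diagonal ms t i) :: int"
  have sorted: "sorted ms" and pos: "\<forall>x\<in>set ms. 0 < x" and p: "1 \<le> ?p"
    using ptv by (auto simp: pseudo_type_vector_def Suc_le_eq)
  define B where "B i = (if run_end ms i \<and> mval ms (i - 1) = mval ms i then ?row (i - 1) else 0)" for i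
  have "std_O_seq ms t = (\<Sum>i = 1..?p. (if run_end ms i then ?row i else 0) + B i)"
    unfolding std_O_seq_def
  proof (intro sum.cong refl)
    fix i assume "i \<in> {1..?p}"
    then show "(if ?p - i \<le> t then s_seq ms i (t - (?p - i)) else 0) = (if run_end ms i then ?row i else 0) + B i"
      using shifted_s_seq_eq[OF sorted pos, of i t] by (auto simp: B_def)
  qed
  also have "\<dots> = (\<Sum>i = 1..?p. if run_end ms i then ?row i else 0) + (\<Sum>i = 1..?p. B i)"
    by (rule sum.distrib)
  also have "(\<Sum>i = 1..?p. B i) = (\<Sum>j = 0..<?p. B (Suc j))"
    unfolding atLeastLessThanSuc_atLeastAtMost[symmetric] One_nat_def by (rule sum.shift_bounds_Suc_ivl)
  also have "\<dots> = (\<Sum>j = 0..<?p. if 1 \<le> j \<and> \<not> run_end ms j then ?row j else 0)"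
  proof (intro sum.cong refl)
    fix j assume "j \<in> {0..<?p}"
    then show "B (Suc j) = (if 1 \<le> j \<and> \<not> run_end ms j then ?row j else 0)"
      using run_end_Suc_iff[OF ptv, of j] mval_pos[OF pos, of 1] p by (auto simp: B_def mval_def)
  qed
  also have "\<dots> = (\<Sum>j = 1..?p. if \<not> run_end ms j then ?row j else 0)"
    by (rule sum.mono_neutral_cong) (auto simp: run_end_def)
  also have "(\<Sum>i = 1..?p. if run_end ms i then ?row i else 0) + \<dots> = (\<Sum>i = 1..?p. ?row i)"
    unfolding sum.distrib[symmetric] by (intro sum.cong refl) simp
  also have "\<dots> = int (card ({1..?p} \<inter> Collect (meets_diagonal ms t)))"
    by simp
  also have "{1..?p} \<inter> Collect (meets_diagonal ms t) = {i \<in> {1..?p}. meets_diagonal ms t i}"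
    by auto
  finally show ?thesis .
qed

section \<open>Regularity\<close>

lemma regularity_std_config:
  assumes "sorted ms" "\<forall>x\<in>set ms. 0 < x" "ms \<noteq> []"
  shows "regularity (ideal_of_points (std_config ms :: 'a::field_char_0 pt set))
    = Max ((\<lambda>i. length ms - i + mval ms i) ` {1..length ms})" (is "_ = ?M")
proof -
  let ?p = "length ms"
  let ?A = "(\<lambda>i. length ms - i + mval ms i) ` {1..length ms}"
  have "finite ?A" "?A \<noteq> {}" using assms(3) by (auto simp: Suc_le_eq)
  then have "?M \<in> ?A" by (rule Max_in)
  then obtain i0 where i0: "i0 \<in> {1..?p}" "?M = ?p - i0 + mval ms i0" by blast
  have le_M: "?p - i + mval ms i \<le> ?M" if "i \<in> {1..?p}" for i
    using that by (intro Max_ge) auto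
  have meets_iff: "(\<exists>i\<in>{1..?p}. meets_diagonal ms t i) \<longleftrightarrow> t < ?M" for t
  proof
    assume "\<exists>i\<in>{1..?p}. meets_diagonal ms t i"
    then obtain i where "i \<in> {1..?p}" "meets_diagonal ms t i" by blast
    then show "t < ?M" using le_M[of i] unfolding meets_diagonal_def by linarith
  next
    assume t: "t < ?M"
    show "\<exists>i\<in>{1..?p}. meets_diagonal ms t i"
    proof (cases "?p - i0 \<le> t")
      case True
      then show ?thesis using i0 t by (auto simp: meets_diagonal_def)
    next
      case False
      then show ?thesis
        using mval_pos[OF assms(2), of "?p - t"] by (intro bexI[of _ "?p - t"]) (auto simp: meets_diagonal_def)
    qed
  qed
  have "delta_hilb (ideal_of_points (std_config ms :: 'a pt set)) t = 0 \<longleftrightarrow> ?M \<le> t" for t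
    using meets_iff[of t] by (auto simp: delta_hilb_std_config[OF assms(1)])
  then show ?thesis
    unfolding regularity_def by (intro Least_equality) auto
qed

text \<open>\<open>p - i + m_i = m_p + excess (\<Delta>T') i\<close>: each zero of \<open>\<Delta>T'\<close> from position i on adds one,
  each entry \<open>> 1\<close> subtracts at least one.\<close>
definition excess :: "nat list \<Rightarrow> nat \<Rightarrow> int" where
  "excess d i = (\<Sum>k = i..<length d. 1 - int (d ! k))"

lemma excess_Suc: "i < length d \<Longrightarrow> excess d i = (1 - int (d ! i)) + excess d (Suc i)"
  unfolding excess_def by (rule sum.atLeast_Suc_lessThan)

lemma excess_length: "excess d (length d) = 0"
  by (simp add: excess_def)

lemma delta_type_nth: "k < length ms \<Longrightarrow> delta_type ms ! k = mval ms (Suc k) - mval ms k"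
  by (simp add: delta_type_def)

lemma length_delta_type [simp]: "length (delta_type ms) = length ms"
  by (simp add: delta_type_def)

lemma excess_delta_type:
  assumes "sorted ms" "i \<le> length ms"
  shows "int (length ms - i + mval ms i) = int (mval ms (length ms)) + excess (delta_type ms) i"
proof -
  have "excess (delta_type ms) i = (\<Sum>k = i..<length ms. 1 - (int (mval ms (Suc k)) - int (mval ms k)))"
    unfolding excess_def length_delta_type
    using mval_mono[OF assms(1)] by (intro sum.cong refl) (simp add: delta_type_nth of_nat_diff)
  also have "\<dots> = (\<Sum>k = i..<length ms. 1) - (\<Sum>k = i..<length ms. int (mval ms (Suc k)) - int (mval ms k))"
    by (rule sum_subtractf)
  also have "(\<Sum>k = i..<length ms. int (mval ms (Suc k)) - int (mval ms k)) = int (mval ms (length ms)) - int (mval ms i)"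
    using assms(2) by (rule sum_Suc_diff')
  finally show ?thesis using assms(2) by simp
qed

definition all_ones_from :: "nat list \<Rightarrow> nat \<Rightarrow> bool" where
  "all_ones_from d i \<longleftrightarrow> (\<forall>j. i \<le> j \<and> j < length d \<longrightarrow> d ! j = 1)"

definition ends_zero_ones_from :: "nat list \<Rightarrow> nat \<Rightarrow> bool" where
  "ends_zero_ones_from d i \<longleftrightarrow> (\<exists>k. i \<le> k \<and> k < length d \<and> d ! k = 0 \<and> all_ones_from d (Suc k))"

definition guarded_from :: "nat list \<Rightarrow> nat \<Rightarrow> bool" where
  "guarded_from d i \<longleftrightarrow> (\<forall>b. i \<le> b \<and> b < length d \<and> d ! b = 0 \<longrightarrow> (\<exists>c. i \<le> c \<and> c < b \<and> 1 < d ! c))"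

lemma ends_zero_ones_from_Suc: "ends_zero_ones_from d (Suc i) \<Longrightarrow> ends_zero_ones_from d i"
  unfolding ends_zero_ones_from_def using Suc_leD by blast

lemma ends_zero_ones_from_Suc_iff:
  assumes "d ! i \<noteq> 0"
  shows "ends_zero_ones_from d (Suc i) \<longleftrightarrow> ends_zero_ones_from d i"
proof
  assume "ends_zero_ones_from d i"
  then obtain k where k: "i \<le> k" "k < length d" "d ! k = 0" "all_ones_from d (Suc k)"
    unfolding ends_zero_ones_from_def by blast
  moreover have "k \<noteq> i" using k(3) assms by auto
  ultimately show "ends_zero_ones_from d (Suc i)"
    unfolding ends_zero_ones_from_def by (intro exI[of _ k]) simp
qed (rule ends_zero_ones_from_Suc)

lemma ends_zero_ones_from_0: "ends_zero_ones_from d 0 \<longleftrightarrow> ends_zero_ones d"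
  by (auto simp: ends_zero_ones_from_def ends_zero_ones_def all_ones_from_def Suc_le_eq)

lemma guarded_from_after_zero:
  assumes "zeros_separated d" "i < length d" "d ! i = 0"
  shows "guarded_from d (Suc i)"
  using assms unfolding guarded_from_def zeros_separated_def by (metis Suc_le_eq)

lemma guarded_from_Suc:
  assumes "guarded_from d i" "d ! i = 1"
  shows "guarded_from d (Suc i)"
  unfolding guarded_from_def
proof (intro allI impI)
  fix b assume "Suc i \<le> b \<and> b < length d \<and> d ! b = 0"
  then obtain c where c: "i \<le> c" "c < b" "1 < d ! c"
    using assms(1) unfolding guarded_from_def by (meson Suc_leD)
  moreover have "c \<noteq> i" using c(3) assms(2) by auto
  ultimately show "\<exists>c. Suc i \<le> c \<and> c < b \<and> 1 < d ! c" by (intro exI[of _ c]) simp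
qed

lemma guarded_from_nonzero: "guarded_from d i \<Longrightarrow> i < length d \<Longrightarrow> d ! i \<noteq> 0"
  unfolding guarded_from_def by auto

lemma excess_le:
  assumes "zeros_separated d" "i \<le> length d"
  shows "excess d i \<le> 1 \<and> (guarded_from d i \<longrightarrow> excess d i \<le> 0)"
  using assms(2)
proof (induction i rule: inc_induct)
  case base
  then show ?case by (simp add: excess_length)
next
  case (step n)
  note excess = excess_Suc[OF step.hyps(2)]
  consider "d ! n = 0" | "d ! n = 1" | "1 < d ! n" by linarith
  then show ?case
  proof cases
    case 1
    then have "excess d (Suc n) \<le> 0"
      using step.IH guarded_from_after_zero[OF assms(1) step.hyps(2)] by blast
    then show ?thesis using excess 1 guarded_from_nonzero[of d n] step.hyps(2) by auto
  next
    case 2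
    then show ?thesis using excess step.IH guarded_from_Suc by auto
  next
    case 3
    then show ?thesis using excess step.IH by auto
  qed
qed

lemma excess_ge:
  assumes "zeros_separated d" "i \<le> length d"
  shows "(1 \<le> excess d i \<longrightarrow> ends_zero_ones_from d i)
    \<and> (guarded_from d i \<and> 0 \<le> excess d i \<longrightarrow> all_ones_from d i \<or> ends_zero_ones_from d i)"
  using assms(2)
proof (induction i rule: inc_induct)
  case base
  then show ?case by (simp add: excess_length all_ones_from_def)
next
  case (step n)
  note excess = excess_Suc[OF step.hyps(2)]
  consider "d ! n = 0" | "d ! n = 1" | "1 < d ! n" by linarith
  then show ?case
  proof cases
    case 1
    then have "guarded_from d (Suc n)" using guarded_from_after_zero[OF assms(1) step.hyps(2)] by simp
    then have "0 \<le> excess d (Suc n) \<longrightarrow> all_ones_from d (Suc n) \<or> ends_zero_ones_from d (Suc n)"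
      using step.IH by blast
    then show ?thesis
      using excess 1 step.hyps(2) guarded_from_nonzero ends_zero_ones_from_Suc
      unfolding ends_zero_ones_from_def by fastforce
  next
    case 2
    have "all_ones_from d (Suc n) \<Longrightarrow> all_ones_from d n"
      using 2 unfolding all_ones_from_def by (metis le_antisym not_less_eq_eq)
    then show ?thesis using excess 2 step.IH guarded_from_Suc ends_zero_ones_from_Suc by auto
  next
    case 3
    then show ?thesis using excess step.IH ends_zero_ones_from_Suc by auto
  qed
qed

lemma ends_zero_ones_delta_type_iff:
  assumes "pseudo_type_vector ms"
  shows "ends_zero_ones (delta_type ms) \<longleftrightarrow> ends_zero_ones_from (delta_type ms) 1"
proof -
  have "delta_type ms ! 0 \<noteq> 0"
    using assms mval_pos[of ms 1] by (auto simp: pseudo_type_vector_def delta_type_nth mval_def Suc_le_eq)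
  then show ?thesis by (simp add: ends_zero_ones_from_0 ends_zero_ones_from_Suc_iff)
qed

lemma excess_last_zero:
  assumes "k < length d" "d ! k = 0" "all_ones_from d (Suc k)"
  shows "excess d k = 1"
proof -
  have "excess d (Suc k) = 0"
    using assms(3) unfolding excess_def all_ones_from_def by (intro sum.neutral) auto
  then show ?thesis using excess_Suc[OF assms(1)] assms(2) by simp
qed

lemma Max_row_reach_eq:
  assumes ptv: "pseudo_type_vector ms" and zs: "zeros_separated (delta_type ms)"
  shows "Max ((\<lambda>i. length ms - i + mval ms i) ` {1..length ms})
       = (if ends_zero_ones (delta_type ms) then last ms + 1 else last ms)"
proof -
  let ?p = "length ms" and ?d = "delta_type ms"
  let ?A = "(\<lambda>i. length ms - i + mval ms i) ` {1..length ms}"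
  have sorted: "sorted ms" and ne: "ms \<noteq> []"
    using ptv by (auto simp: pseudo_type_vector_def)
  have last: "last ms = mval ms ?p" using ne by (simp add: last_conv_nth mval_def)
  have row_value: "int (?p - i + mval ms i) = int (last ms) + excess ?d i" if "i \<le> ?p" for i
    using excess_delta_type[OF sorted that] last by simp
  note ends_iff = ends_zero_ones_delta_type_iff[OF ptv]
  show ?thesis
  proof (cases "ends_zero_ones ?d")
    case True
    then obtain k where k: "1 \<le> k" "k < ?p" "?d ! k = 0" "all_ones_from ?d (Suc k)"
      unfolding ends_iff ends_zero_ones_from_def by auto
    have "excess ?d k = 1" using k by (intro excess_last_zero) auto
    then have "last ms + 1 \<in> ?A" using row_value[of k] k by (intro image_eqI[of _ _ k]) auto
    moreover have "y \<le> last ms + 1" if "y \<in> ?A" for y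
      using that row_value excess_le[OF zs] by fastforce
    ultimately show ?thesis using True by (intro Max_eqI) auto
  next
    case False
    have "last ms \<in> ?A" using last ne by (intro image_eqI[of _ _ ?p]) (auto simp: Suc_le_eq)
    moreover have "y \<le> last ms" if "y \<in> ?A" for y
    proof -
      obtain i where i: "1 \<le> i" "i \<le> ?p" "y = ?p - i + mval ms i" using \<open>y \<in> ?A\<close> by auto
      have "\<not> ends_zero_ones_from ?d i" using False ends_iff i(1)
        unfolding ends_zero_ones_from_def by (meson order.trans)
      then have "excess ?d i \<le> 0" using excess_ge[OF zs, of i] i by auto
      then show ?thesis using row_value[of i] i by simp
    qed
    ultimately show ?thesis using False by (intro Max_eqI) auto
  qed
qed

text \<open>For \<open>T' = (1, 1, 2, 2, \<dots>, n, n)\<close>, \<open>\<Delta>T' = (1, 0, 1, 0, \<dots>)\<close> has no entry \<open>> 1\<close>, and row 1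
  alone forces regularity at least 2n, while \<open>m_p = n\<close>.\<close>
definition doubled_type :: "nat \<Rightarrow> nat list" where
  "doubled_type n = map (\<lambda>i. i div 2 + 1) [0..<2 * n]"

lemma doubled_type_nth: "i < 2 * n \<Longrightarrow> doubled_type n ! i = i div 2 + 1"
  by (simp add: doubled_type_def)

lemma length_doubled_type [simp]: "length (doubled_type n) = 2 * n"
  by (simp add: doubled_type_def)

lemma pseudo_type_vector_doubled_type: "1 \<le> n \<Longrightarrow> pseudo_type_vector (doubled_type n)"
  unfolding pseudo_type_vector_def sorted_iff_nth_mono
  by (auto simp: doubled_type_nth doubled_type_def intro: div_le_mono)

lemma not_zeros_separated_doubled_type:
  assumes "2 \<le> n" shows "\<not> zeros_separated (delta_type (doubled_type n))"
proof
  let ?d = "delta_type (doubled_type n)"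
  have d: "?d ! 1 = 0" "?d ! 2 = 1" "?d ! 3 = 0" "3 < length ?d"
    using assms by (simp_all add: delta_type_nth mval_def doubled_type_nth)
  assume "zeros_separated ?d"
  then obtain c where "1 < c" "c < 3" "1 < ?d ! c"
    using d unfolding zeros_separated_def by (metis one_less_numeral_iff semiring_norm(77))
  then have "c = 2" "1 < ?d ! c" by auto
  then show False using d(2) by simp
qed

lemma last_doubled_type:
  assumes "1 \<le> n" shows "last (doubled_type n) = n"
proof -
  have "last (doubled_type n) = doubled_type n ! (2 * n - 1)"
    using assms by (simp add: last_conv_nth flip: length_0_conv)
  also have "\<dots> = (2 * n - 1) div 2 + 1" using assms by (intro doubled_type_nth) simp
  also have "\<dots> = n" using assms by presburger
  finally show ?thesis .
qed

lemma regularity_doubled_type_ge: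
  assumes "1 \<le> n"
  shows "2 * n \<le> regularity (ideal_of_points (std_config (doubled_type n) :: 'a::field_char_0 pt set))"
proof -
  let ?ms = "doubled_type n"
  have "2 * n = length ?ms - 1 + mval ?ms 1" using assms by (simp add: mval_def doubled_type_nth)
  also have "\<dots> \<le> Max ((\<lambda>i. length ?ms - i + mval ?ms i) ` {1..length ?ms})"
    using assms by (intro Max_ge) auto
  also have "\<dots> = regularity (ideal_of_points (std_config ?ms :: 'a pt set))"
    using pseudo_type_vector_doubled_type[OF assms]
    by (intro regularity_std_config[symmetric]) (auto simp: pseudo_type_vector_def)
  finally show ?thesis .
qed

lemma delta_hilb_std_config_eq_std_O_seq:
  assumes "pseudo_type_vector ms"
  shows "delta_hilb (ideal_of_points (std_config ms :: 'a::field_char_0 pt set)) t = std_O_seq ms t"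
proof -
  have "sorted ms" using assms by (simp add: pseudo_type_vector_def)
  then show ?thesis by (simp add: delta_hilb_std_config std_O_seq_eq_card[OF assms])
qed

lemma regularity_std_config_if_zeros_separated:
  assumes "pseudo_type_vector ms" "zeros_separated (delta_type ms)"
  shows "regularity (ideal_of_points (std_config ms :: 'a::field_char_0 pt set))
    = (if ends_zero_ones (delta_type ms) then last ms + 1 else last ms)"
proof -
  have "sorted ms" "\<forall>x\<in>set ms. 0 < x" "ms \<noteq> []" using assms(1) by (simp_all add: pseudo_type_vector_def)
  then have "regularity (ideal_of_points (std_config ms :: 'a pt set))
      = Max ((\<lambda>i. length ms - i + mval ms i) ` {1..length ms})"
    by (rule regularity_std_config)
  also have "\<dots> = (if ends_zero_ones (delta_type ms) then last ms + 1 else last ms)"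
    by (rule Max_row_reach_eq[OF assms])
  finally show ?thesis .
qed

lemma regularity_std_config_unbounded:
  "\<exists>ms. pseudo_type_vector ms \<and> \<not> zeros_separated (delta_type ms) \<and>
    last ms + N \<le> regularity (ideal_of_points (std_config ms :: 'a::field_char_0 pt set))"
proof (intro exI conjI)
  show "pseudo_type_vector (doubled_type (N + 2))" by (rule pseudo_type_vector_doubled_type) simp
  show "\<not> zeros_separated (delta_type (doubled_type (N + 2)))" by (rule not_zeros_separated_doubled_type) simp
  have "2 * (N + 2) \<le> regularity (ideal_of_points (std_config (doubled_type (N + 2)) :: 'a pt set))"
    by (rule regularity_doubled_type_ge) simp
  then show "last (doubled_type (N + 2)) + N \<le> regularity (ideal_of_points (std_config (doubled_type (N + 2)) :: 'a pt set))"
    using last_doubled_type[of "N + 2"] by simp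
qed

theorem proposition3p6:
  fixes ms :: "nat list"
  assumes "pseudo_type_vector ms"
  shows "obtainable_by_bdl (ideal_of_points (std_config ms :: 'a::field_char_0 pt set))
    \<and> (\<forall>t. delta_hilb (ideal_of_points (std_config ms :: 'a pt set)) t = std_O_seq ms t)
    \<and> (zeros_separated (delta_type ms) \<longrightarrow>
         regularity (ideal_of_points (std_config ms :: 'a pt set)) =
           (if ends_zero_ones (delta_type ms) then last ms + 1 else last ms))
    \<and> (\<forall>N::nat. \<exists>ms'. pseudo_type_vector ms' \<and> \<not> zeros_separated (delta_type ms') \<and>
         last ms' + N \<le> regularity (ideal_of_points (std_config ms' :: 'a pt set)))"
  using obtainable_by_bdl_std_config[OF assms] delta_hilb_std_config_eq_std_O_seq[OF assms]
    regularity_std_config_if_zeros_separated[OF assms] regularity_std_config_unbounded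
  by blast

end
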